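(* Let $\mathcal{N}$ be any finite-dimensional quantum channel and $0\le\lambda<1$. Then for every admissible state $\rho$ for $\mathcal{N}$, \[ I(X;B)_\rho+\lambda I(A\rangle BX)_\rho\le \sup_{\sigma} I(X;B)_\sigma, \] the supremum being over admissible states $\sigma$ for $\mathcal{N}$. Consequently $f_\lambda(\mathcal{N})\le f_0(\mathcal{N})$ for $0\le\lambda<1$, so points of the one-shot CQ trade-off curve other than the classical-capacity point are obtained only from $\lambda\ge1$.
   Context: For a quantum channel $\mathcal{N}^{A'\to B}$ with isometric extension $U_{\mathcal{N}}^{A'\to BE}$, an admissible state is $\rho^{XABE}=\sum_x p_X(x)|x\rangle\langle x|^X\otimes U_{\mathcal{N}}(\phi_x^{AA'})U_{\mathcal{N}}^\dagger$ with $X$ a finite alphabet, $p_X$ a probability distribution, $A$ a finite-dimensional reference, each $\phi_x^{AA'}$ pure. Entropies base 2; $I(A\rangle BX)\equiv H(BX)-H(ABX)$. $f_\lambda(\mathcal{N})\equiv\sup_\rho[I(X;B)_\rho+\lambda I(A\rangle BX)_\rho]$ over admissible states. *)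

theory Defs
  imports "Jordan_Normal_Form.Char_Poly" "HOL-Library.Multiset"
begin

(* A composite system with dimensions d1,...,dk uses the flat index
   ((i1*d2 + i2)*d3 + i3)... (lexicographic / Kronecker ordering). *)

definition kron :: "complex mat \<Rightarrow> complex mat \<Rightarrow> complex mat" where
  "kron A B = mat (dim_row A * dim_row B) (dim_col A * dim_col B)
     (\<lambda>(i,j). A $$ (i div dim_row B, j div dim_col B) * B $$ (i mod dim_row B, j mod dim_col B))"

definition adj :: "complex mat \<Rightarrow> complex mat" where
  "adj A = mat (dim_col A) (dim_row A) (\<lambda>(i,j). cnj (A $$ (j,i)))"

definition outer :: "complex vec \<Rightarrow> complex mat" where
  "outer w = mat (dim_vec w) (dim_vec w) (\<lambda>(i,j). w $ i * cnj (w $ j))"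

definition proj :: "nat \<Rightarrow> nat \<Rightarrow> complex mat" where
  "proj n x = mat n n (\<lambda>(i,j). if i = x \<and> j = x then 1 else 0)"

definition ptrace2 :: "nat \<Rightarrow> nat \<Rightarrow> complex mat \<Rightarrow> complex mat" where
  "ptrace2 d1 d2 M = mat d1 d1 (\<lambda>(i,j). \<Sum>k<d2. M $$ (i*d2 + k, j*d2 + k))"

definition ptrace1 :: "nat \<Rightarrow> nat \<Rightarrow> complex mat \<Rightarrow> complex mat" where
  "ptrace1 d1 d2 M = mat d2 d2 (\<lambda>(i,j). \<Sum>k<d1. M $$ (k*d2 + i, k*d2 + j))"

definition ptrace_mid :: "nat \<Rightarrow> nat \<Rightarrow> nat \<Rightarrow> complex mat \<Rightarrow> complex mat" where
  "ptrace_mid d1 d2 d3 M = mat (d1*d3) (d1*d3) (\<lambda>(i,j).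
     \<Sum>k<d2. M $$ (((i div d3)*d2 + k)*d3 + i mod d3, ((j div d3)*d2 + k)*d3 + j mod d3))"

definition eigvals :: "complex mat \<Rightarrow> complex multiset" where
  "eigvals A = (THE M. char_poly A = prod_mset (image_mset (\<lambda>a. [:-a, 1:]) M))"

(* von Neumann entropy, base 2, with 0 log 0 = 0 (note log 2 0 = 0 in Isabelle) *)
definition vN_entropy :: "complex mat \<Rightarrow> real" where
  "vN_entropy \<rho> = sum_mset (image_mset (\<lambda>a. - (Re a * log 2 (Re a))) (eigvals \<rho>))"

(* V : A' -> B (x) E is an isometry; it is the isometric (Stinespring) extension of the
   channel N(\<rho>) = Tr_E (V \<rho> V^dagger). Every finite-dimensional channel arises this way. *)
definition isometry :: "nat \<Rightarrow> nat \<Rightarrow> nat \<Rightarrow> complex mat \<Rightarrow> bool" where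
  "isometry dA' dB dE V \<longleftrightarrow> 0 < dA' \<and> V \<in> carrier_mat (dB*dE) dA' \<and> adj V * V = 1\<^sub>m dA'"

(* the state rho^{XABE} = sum_x p(x) |x><x| (x) (1_A (x) V) phi_x (1_A (x) V)^dagger,
   phi_x = |psi_x><psi_x| pure on A A' *)
definition cq_state :: "nat \<Rightarrow> nat \<Rightarrow> complex mat \<Rightarrow> (nat \<Rightarrow> real) \<Rightarrow> (nat \<Rightarrow> complex vec) \<Rightarrow> complex mat" where
  "cq_state nX dA V p \<psi> =
     (let D = nX * (dA * dim_row V) in
      mat D D (\<lambda>(i,j). \<Sum>x<nX. complex_of_real (p x) *
          kron (proj nX x) (outer (kron (1\<^sub>m dA) V *\<^sub>v \<psi> x)) $$ (i,j)))"

(* admissible states, recorded as (|X|, dim A, rho^{XABE}) *)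
definition admissible_states :: "nat \<Rightarrow> nat \<Rightarrow> nat \<Rightarrow> complex mat \<Rightarrow> (nat \<times> nat \<times> complex mat) set" where
  "admissible_states dA' dB dE V =
     {(nX, dA, \<rho>) | nX dA \<rho>. \<exists>p \<psi>.
        0 < dA \<and> (\<forall>x<nX. 0 \<le> p x) \<and> (\<Sum>x<nX. p x) = 1 \<and>
        (\<forall>x<nX. \<psi> x \<in> carrier_vec (dA * dA') \<and> \<psi> x \<bullet>c \<psi> x = 1) \<and>
        \<rho> = cq_state nX dA V p \<psi>}"

definition rho_XAB :: "nat \<Rightarrow> nat \<Rightarrow> nat \<times> nat \<times> complex mat \<Rightarrow> complex mat" where
  "rho_XAB dB dE s = (case s of (nX, dA, \<rho>) \<Rightarrow> ptrace2 (nX*dA*dB) dE \<rho>)"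

definition rho_XB :: "nat \<Rightarrow> nat \<Rightarrow> nat \<times> nat \<times> complex mat \<Rightarrow> complex mat" where
  "rho_XB dB dE s = (case s of (nX, dA, \<rho>) \<Rightarrow> ptrace_mid nX dA dB (rho_XAB dB dE s))"

definition rho_X :: "nat \<Rightarrow> nat \<Rightarrow> nat \<times> nat \<times> complex mat \<Rightarrow> complex mat" where
  "rho_X dB dE s = (case s of (nX, dA, \<rho>) \<Rightarrow> ptrace2 nX dB (rho_XB dB dE s))"

definition rho_B :: "nat \<Rightarrow> nat \<Rightarrow> nat \<times> nat \<times> complex mat \<Rightarrow> complex mat" where
  "rho_B dB dE s = (case s of (nX, dA, \<rho>) \<Rightarrow> ptrace1 nX dB (rho_XB dB dE s))"

definition mutual_XB :: "nat \<Rightarrow> nat \<Rightarrow> nat \<times> nat \<times> complex mat \<Rightarrow> real" where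
  "mutual_XB dB dE s = vN_entropy (rho_X dB dE s) + vN_entropy (rho_B dB dE s) - vN_entropy (rho_XB dB dE s)"

definition coherent_info :: "nat \<Rightarrow> nat \<Rightarrow> nat \<times> nat \<times> complex mat \<Rightarrow> real" where
  "coherent_info dB dE s = vN_entropy (rho_XB dB dE s) - vN_entropy (rho_XAB dB dE s)"

definition f_lambda :: "nat \<Rightarrow> nat \<Rightarrow> nat \<Rightarrow> complex mat \<Rightarrow> real \<Rightarrow> real" where
  "f_lambda dA' dB dE V lam =
     Sup ((\<lambda>s. mutual_XB dB dE s + lam * coherent_info dB dE s) ` admissible_states dA' dB dE V)"

end

theory Submission
  imports Defs "Jordan_Normal_Form.Spectral_Radius"
begin

(* Write an admissible state through its ensemble {p_x, psi_x}.  For each x let beta_x, tau_x and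
   eps_x be the reduced states on B, AB and E of the pure state (1 (x) V) psi_x.  Then
     I(X;B) = H(B) - sum_x p_x H(beta_x)   and   I(A>BX) = sum_x p_x (H(beta_x) - H(eps_x)),
   using H(tau_x) = H(eps_x) (the two marginals of a pure state have the same spectrum).
   Diagonalise the A'-marginal alpha_x = sum_y q_xy |u_xy><u_xy| and let beta_xy, eps_xy be the
   marginals of the pure state V u_xy; again H(beta_xy) = H(eps_xy).  Concavity of the entropy gives
   H(beta_x), H(eps_x) >= sum_y q_xy H(beta_xy), hence for 0 <= lam <= 1
     I(X;B) + lam I(A>BX) <= H(B) - sum_xy p_x q_xy H(beta_xy) = I(X;B)_sigma
   for the admissible ensemble sigma = {p_x q_xy, u_xy} with a trivial reference system, whose
   B-marginal is unchanged (the estimate in fact holds for all 0 <= lam <= 1).  Since I(X;B) is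
   bounded, the suprema exist and the theorem follows. *)

lemma sum_lessThan_add:
  "(\<Sum>k<m+e. (f::nat \<Rightarrow> 'a::comm_monoid_add) k) = (\<Sum>k<m. f k) + (\<Sum>i<e. f (m+i))"
  by (induction e) (simp_all add: add.assoc)

lemma sum_prod_index: "(\<Sum>j<n*d. (f::nat \<Rightarrow> 'a::comm_monoid_add) j) = (\<Sum>a<n. \<Sum>c<d. f (a*d + c))"
proof (induction n)
  case (Suc n)
  have "(\<Sum>j<Suc n * d. f j) = (\<Sum>j<n*d + d. f j)" by (simp add: add.commute)
  then show ?case using Suc by (simp add: sum_lessThan_add)
qed simp

lemma flat_index_less: "(a::nat) < n \<Longrightarrow> r < m \<Longrightarrow> a*m + r < n*m"
proof -
  assume a: "a < n" and r: "r < m"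
  have "a*m + r < (a+1)*m" using r by simp
  also have "\<dots> \<le> n*m" using a by (intro mult_right_mono) auto
  finally show ?thesis .
qed

text \<open>Stated separately so that they also apply when \<open>m\<close> is itself a product of dimensions.\<close>
lemma flat_index_div: "r < (m::nat) \<Longrightarrow> (a*m + r) div m = a"
  by simp

lemma flat_index_mod: "r < (m::nat) \<Longrightarrow> (a*m + r) mod m = r"
  by simp

lemma sum_rotate3: "(\<Sum>y\<in>A. \<Sum>i\<in>B. \<Sum>j\<in>C. f y i j) = (\<Sum>j\<in>C. \<Sum>y\<in>A. \<Sum>i\<in>B. f y i j)"
proof -
  have "(\<Sum>y\<in>A. \<Sum>i\<in>B. \<Sum>j\<in>C. f y i j) = (\<Sum>y\<in>A. \<Sum>j\<in>C. \<Sum>i\<in>B. f y i j)"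
    by (rule sum.cong[OF refl], rule sum.swap)
  also have "\<dots> = (\<Sum>j\<in>C. \<Sum>y\<in>A. \<Sum>i\<in>B. f y i j)" by (rule sum.swap)
  finally show ?thesis .
qed

lemma sum_delta_right: "(a::nat) < n \<Longrightarrow> (\<Sum>b<n. (g b::complex) * (if a = b then 1 else 0)) = g a"
proof -
  assume a: "a < n"
  have "(\<Sum>b<n. g b * (if a = b then 1 else 0)) = (\<Sum>b<n. if a = b then g b else 0)"
    by (rule sum.cong) auto
  also have "\<dots> = g a" using a by (subst sum.delta') auto
  finally show ?thesis .
qed

lemma sum_diag_block:
  assumes "(u::nat) < N"
  shows "(\<Sum>x<N. if x = u \<and> x = v then G x else 0) = (if u = v then G u else (0::'a::comm_monoid_add))"
proof (cases "u = v")
  case True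
  have "(\<Sum>x<N. if x = u \<and> x = v then G x else 0) = (\<Sum>x<N. if x = u then G x else 0)"
    using True by (intro sum.cong) auto
  then show ?thesis using True assms by (simp add: sum.delta)
qed (auto intro: sum.neutral)

text \<open>Vectors of \<open>\<complex>\<^sup>n\<close> are functions on \<open>{..<n}\<close>; a family \<open>e\<close> of vectors is indexed by its first argument.\<close>

definition ip :: "nat \<Rightarrow> (nat \<Rightarrow> complex) \<Rightarrow> (nat \<Rightarrow> complex) \<Rightarrow> complex" where
  "ip n x y = (\<Sum>a<n. x a * cnj (y a))"

definition ortho :: "nat \<Rightarrow> nat \<Rightarrow> (nat \<Rightarrow> nat \<Rightarrow> complex) \<Rightarrow> bool" where
  "ortho n m e \<longleftrightarrow> (\<forall>i<m. \<forall>j<m. ip n (e i) (e j) = (if i = j then 1 else 0))"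

abbreviation onb :: "nat \<Rightarrow> (nat \<Rightarrow> nat \<Rightarrow> complex) \<Rightarrow> bool" where
  "onb n e \<equiv> ortho n n e"

definition mv :: "nat \<Rightarrow> complex mat \<Rightarrow> (nat \<Rightarrow> complex) \<Rightarrow> nat \<Rightarrow> complex" where
  "mv n M x = (\<lambda>a. \<Sum>b<n. M $$ (a,b) * x b)"

definition herm :: "nat \<Rightarrow> complex mat \<Rightarrow> bool" where
  "herm n M \<longleftrightarrow> (\<forall>a<n. \<forall>b<n. M $$ (a,b) = cnj (M $$ (b,a)))"

definition psd :: "nat \<Rightarrow> complex mat \<Rightarrow> bool" where
  "psd n M \<longleftrightarrow> (\<forall>x. 0 \<le> Re (ip n (mv n M x) x))"

definition tr :: "nat \<Rightarrow> complex mat \<Rightarrow> complex" where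
  "tr n M = (\<Sum>a<n. M $$ (a,a))"

definition density :: "nat \<Rightarrow> complex mat \<Rightarrow> bool" where
  "density n M \<longleftrightarrow> M \<in> carrier_mat n n \<and> herm n M \<and> psd n M \<and> tr n M = 1"

lemma ip_conj: "ip n y x = cnj (ip n x y)"
  unfolding ip_def by (simp add: mult.commute)

lemma ip_self_real: "ip n x x = complex_of_real (\<Sum>a<n. (cmod (x a))^2)"
  unfolding ip_def of_real_sum by (intro sum.cong) (simp_all, metis complex_norm_square of_real_power)

lemma ip_self_eq_0: "ip n x x = 0 \<Longrightarrow> a < n \<Longrightarrow> x a = 0"
proof -
  assume "ip n x x = 0" "a < n"
  then have "(\<Sum>b<n. (cmod (x b))^2) = 0" using ip_self_real by (metis of_real_eq_0_iff)
  then have "\<forall>b\<in>{..<n}. (cmod (x b))^2 = 0" by (subst (asm) sum_nonneg_eq_0_iff) auto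
  then show "x a = 0" using \<open>a < n\<close> by auto
qed

lemma ip_scale_left: "ip n (\<lambda>a. c * x a) y = c * ip n x y"
  unfolding ip_def by (simp add: sum_distrib_left mult_ac)

lemma normalize_vec:
  assumes "ip n v v \<noteq> 0"
  shows "\<exists>s::real. s > 0 \<and> ip n (\<lambda>a. complex_of_real s * v a) (\<lambda>a. complex_of_real s * v a) = 1"
proof -
  define r where "r = (\<Sum>b<n. (cmod (v b))^2)"
  have r: "ip n v v = complex_of_real r" unfolding r_def by (rule ip_self_real)
  have rpos: "r > 0" using assms r unfolding r_def by (metis less_eq_real_def of_real_0 sum_nonneg zero_le_power2)
  have "ip n (\<lambda>a. complex_of_real (1/sqrt r) * v a) (\<lambda>a. complex_of_real (1/sqrt r) * v a)
     = complex_of_real (1/sqrt r) * complex_of_real (1/sqrt r) * ip n v v"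
    unfolding ip_def by (simp add: sum_distrib_left mult_ac)
  also have "\<dots> = 1" using rpos r by (simp add: of_real_mult[symmetric] del: of_real_mult)
  finally show ?thesis using rpos by (intro exI[of _ "1/sqrt r"]) auto
qed

definition basis_mat :: "nat \<Rightarrow> (nat \<Rightarrow> nat \<Rightarrow> complex) \<Rightarrow> complex mat" where
  "basis_mat n e = mat n n (\<lambda>(a,k). e k a)"

lemma adj_basis_mat: "adj (basis_mat n e) = mat n n (\<lambda>(k,a). cnj (e k a))"
  unfolding adj_def basis_mat_def by (rule eq_matI) auto

lemma basis_mat_unitary:
  assumes e: "onb n e"
  shows "adj (basis_mat n e) * basis_mat n e = 1\<^sub>m n" "basis_mat n e * adj (basis_mat n e) = 1\<^sub>m n"
proof -
  define U where "U = mat n n (\<lambda>(a,k). e k a)"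
  define Uh where "Uh = mat n n (\<lambda>(k,a). cnj (e k a))"
  have U: "U \<in> carrier_mat n n" and Uh: "Uh \<in> carrier_mat n n" unfolding U_def Uh_def by auto
  have UhU: "Uh * U = 1\<^sub>m n"
  proof (rule eq_matI)
    fix i j assume ij: "i < dim_row (1\<^sub>m n)" "j < dim_col (1\<^sub>m n)"
    have "(Uh * U) $$ (i,j) = (\<Sum>a<n. cnj (e i a) * e j a)"
      using ij unfolding U_def Uh_def by (auto simp: scalar_prod_def atLeast0LessThan intro!: sum.cong)
    also have "\<dots> = ip n (e j) (e i)" unfolding ip_def by (simp add: mult.commute)
    finally show "(Uh * U) $$ (i,j) = 1\<^sub>m n $$ (i,j)" using e ij unfolding ortho_def by simp
  qed (use U Uh in auto)
  have "U * Uh = 1\<^sub>m n" using mat_mult_left_right_inverse[OF Uh U UhU] .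
  then show "adj (basis_mat n e) * basis_mat n e = 1\<^sub>m n" "basis_mat n e * adj (basis_mat n e) = 1\<^sub>m n"
    using UhU unfolding adj_basis_mat unfolding basis_mat_def U_def Uh_def by simp_all
qed

lemma onb_complete:
  assumes "onb n e" "a < n" "b < n"
  shows "(\<Sum>k<n. e k a * cnj (e k b)) = (if a = b then 1 else 0)"
proof -
  have "(basis_mat n e * adj (basis_mat n e)) $$ (a,b) = (\<Sum>k<n. e k a * cnj (e k b))"
    using assms unfolding adj_basis_mat unfolding basis_mat_def
    by (auto simp: scalar_prod_def atLeast0LessThan intro!: sum.cong)
  then show ?thesis using basis_mat_unitary(2)[OF assms(1)] assms by simp
qed

lemma onb_expand:
  assumes "onb n f" "a < n"
  shows "x a = (\<Sum>k<n. f k a * ip n x (f k))"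
proof -
  have "(\<Sum>k<n. f k a * ip n x (f k)) = (\<Sum>b<n. x b * (\<Sum>k<n. f k a * cnj (f k b)))"
    unfolding ip_def by (simp add: sum_distrib_left sum_distrib_right mult_ac) (rule sum.swap)
  also have "\<dots> = (\<Sum>b<n. x b * (if a = b then 1 else 0))"
    using onb_complete[OF assms(1) assms(2)] by (intro sum.cong) auto
  also have "\<dots> = x a" using assms(2) by (rule sum_delta_right)
  finally show ?thesis by simp
qed

lemma parseval:
  assumes g: "onb n g"
  shows "complex_of_real (\<Sum>k<n. (cmod (ip n x (g k)))^2) = ip n x x"
proof -
  have "ip n x x = (\<Sum>a<n. (\<Sum>k<n. g k a * ip n x (g k)) * cnj (x a))"
    unfolding ip_def[of n x x] using onb_expand[OF g, of _ x] by (intro sum.cong) auto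
  also have "\<dots> = (\<Sum>k<n. ip n x (g k) * (\<Sum>a<n. g k a * cnj (x a)))"
    by (simp add: sum_distrib_right sum_distrib_left mult_ac) (rule sum.swap)
  also have "\<dots> = (\<Sum>k<n. ip n x (g k) * cnj (ip n x (g k)))"
    unfolding ip_def by (simp add: mult.commute)
  also have "\<dots> = complex_of_real (\<Sum>k<n. (cmod (ip n x (g k)))^2)"
    unfolding of_real_sum by (intro sum.cong) (simp_all, metis complex_norm_square of_real_power)
  finally show ?thesis by simp
qed

text \<open>A proper orthonormal system has a unit vector orthogonal to it (project a standard basis
  vector onto the orthogonal complement; not all projections vanish, by counting dimensions).\<close>
lemma unit_orth:
  assumes o: "ortho n m e" and mn: "m < n"
  shows "\<exists>v. ip n v v = 1 \<and> (\<forall>j<m. ip n v (e j) = 0)"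
proof -
  define w where "w a b = (if a = b then 1 else 0) - (\<Sum>i<m. e i b * cnj (e i a))" for a b
  have worth: "ip n (w a) (e j) = 0" if "a < n" "j < m" for a j
  proof -
    have "ip n (w a) (e j) = (\<Sum>b<n. (if a = b then 1 else 0) * cnj (e j b))
        - (\<Sum>b<n. \<Sum>i<m. e i b * cnj (e i a) * cnj (e j b))"
      unfolding ip_def w_def by (simp add: left_diff_distrib sum_subtractf sum_distrib_right)
    also have "(\<Sum>b<n. (if a = b then 1 else 0) * cnj (e j b)) = cnj (e j a)"
      using sum_delta_right[OF that(1), of "\<lambda>b. cnj (e j b)"] by (simp add: mult.commute)
    also have "(\<Sum>b<n. \<Sum>i<m. e i b * cnj (e i a) * cnj (e j b)) = (\<Sum>i<m. cnj (e i a) * ip n (e i) (e j))"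
      unfolding ip_def by (subst sum.swap) (simp add: sum_distrib_left mult_ac)
    also have "\<dots> = (\<Sum>i<m. cnj (e i a) * (if j = i then 1 else 0))"
      using o that unfolding ortho_def by (intro sum.cong) auto
    also have "\<dots> = cnj (e j a)" using that(2) by (rule sum_delta_right)
    finally show ?thesis by simp
  qed
  have "\<exists>a<n. ip n (w a) (w a) \<noteq> 0"
  proof (rule ccontr)
    assume "\<not> ?thesis"
    then have wz: "w a b = 0" if "a < n" "b < n" for a b using ip_self_eq_0 that by blast
    have "(\<Sum>a<n. (\<Sum>i<m. e i a * cnj (e i a))) = (\<Sum>a<n. (1::complex))"
      using wz unfolding w_def by (intro sum.cong) (auto simp: right_minus_eq, metis)
    moreover have "(\<Sum>a<n. (\<Sum>i<m. e i a * cnj (e i a))) = (\<Sum>i<m. ip n (e i) (e i))"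
      unfolding ip_def by (rule sum.swap)
    moreover have "\<dots> = (\<Sum>i<m. (1::complex))" using o unfolding ortho_def by auto
    ultimately have "of_nat n = (of_nat m :: complex)" by simp
    then show False using mn by simp
  qed
  then obtain a where a: "a < n" "ip n (w a) (w a) \<noteq> 0" by auto
  then obtain s :: real where s: "ip n (\<lambda>b. s * w a b) (\<lambda>b. s * w a b) = 1"
    using normalize_vec by blast
  moreover have "ip n (\<lambda>b. s * w a b) (e j) = 0" if "j < m" for j
    using worth[OF a(1) that] by (simp add: ip_scale_left)
  ultimately show ?thesis by blast
qed

lemma extend_ortho:
  assumes o: "ortho n m e" and mn: "m \<le> n"
  shows "\<exists>f. onb n f \<and> (\<forall>i<m. f i = e i)"
proof -
  have "\<exists>f. ortho n k f \<and> (\<forall>i<m. f i = e i)" if "m \<le> k" "k \<le> n" for k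
    using that
  proof (induction k)
    case 0
    then show ?case using o by auto
  next
    case (Suc k)
    show ?case
    proof (cases "m = Suc k")
      case True
      then show ?thesis using o by auto
    next
      case False
      then obtain f where f: "ortho n k f" "\<forall>i<m. f i = e i" using Suc by auto
      obtain v where v: "ip n v v = 1" "\<forall>j<k. ip n v (f j) = 0"
        using unit_orth[OF f(1)] Suc.prems by auto
      have "ip n (f j) v = 0" if "j < k" for j using v that ip_conj[of n "f j" v] by simp
      then have "ortho n (Suc k) (f(k := v))"
        using f(1) v unfolding ortho_def by (auto simp: less_Suc_eq)
      moreover have "\<forall>i<m. (f(k := v)) i = e i" using f False Suc.prems by auto
      ultimately show ?thesis by blast
    qed
  qed
  then show ?thesis using mn by auto
qed

section \<open>The spectral theorem for Hermitian matrices\<close>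

lemma mv_scale: "mv n M (\<lambda>a. c * x a) = (\<lambda>a. c * mv n M x a)"
  unfolding mv_def by (simp add: sum_distrib_left mult_ac)

lemma ip_herm: "herm n M \<Longrightarrow> ip n (mv n M x) y = ip n x (mv n M y)"
proof -
  assume h: "herm n M"
  have "ip n (mv n M x) y = (\<Sum>a<n. \<Sum>b<n. M $$ (a,b) * x b * cnj (y a))"
    unfolding ip_def mv_def by (simp add: sum_distrib_right)
  also have "\<dots> = (\<Sum>b<n. \<Sum>a<n. M $$ (a,b) * x b * cnj (y a))" by (rule sum.swap)
  also have "\<dots> = (\<Sum>b<n. \<Sum>a<n. x b * (cnj (M $$ (b,a)) * cnj (y a)))"
  proof (intro sum.cong refl)
    fix a b assume "a \<in> {..<n}" "b \<in> {..<n}"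
    then have hab: "M $$ (a,b) = cnj (M $$ (b,a))" using h unfolding herm_def by (meson lessThan_iff)
    show "M $$ (a,b) * x b * cnj (y a) = x b * (cnj (M $$ (b,a)) * cnj (y a))"
      unfolding hab by (simp add: mult_ac)
  qed
  also have "\<dots> = ip n x (mv n M y)" unfolding ip_def mv_def by (simp add: sum_distrib_left)
  finally show ?thesis .
qed

lemma herm_complement_invariant:
  assumes h: "herm n M" and ev: "\<forall>a<n. mv n M f a = c * f a" and o: "ip n x f = 0"
  shows "ip n (mv n M x) f = 0"
proof -
  have "ip n (mv n M x) f = ip n x (mv n M f)" using ip_herm[OF h] .
  also have "\<dots> = ip n x (\<lambda>a. c * f a)" unfolding ip_def using ev by (intro sum.cong) auto
  also have "\<dots> = cnj c * ip n x f" unfolding ip_def by (simp add: sum_distrib_left mult_ac)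
  finally show ?thesis using o by simp
qed

lemma herm_eigenvalue_real:
  assumes h: "herm n M" and ev: "\<forall>a<n. mv n M v a = c * v a" and v: "ip n v v \<noteq> 0"
  shows "c = complex_of_real (Re c)"
proof -
  have "ip n (mv n M v) v = c * ip n v v" "ip n v (mv n M v) = cnj c * ip n v v"
    unfolding ip_def using ev by (simp_all add: sum_distrib_left mult_ac)
  then have "c * ip n v v = cnj c * ip n v v" using ip_herm[OF h] by metis
  then have "c = cnj c" using v by simp
  then show ?thesis by (simp add: complex_eq_iff)
qed

lemma tail_combination:
  assumes f: "onb n f" and mn: "m \<le> n"
  shows "ip n (\<lambda>a. \<Sum>j<n-m. w j * f (m+j) a) y = (\<Sum>j<n-m. w j * ip n (f (m+j)) y)"
    and "k < m \<Longrightarrow> ip n (\<lambda>a. \<Sum>j<n-m. w j * f (m+j) a) (f k) = 0"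
    and "i < n-m \<Longrightarrow> ip n (\<lambda>a. \<Sum>j<n-m. w j * f (m+j) a) (f (m+i)) = w i"
proof -
  have fo: "ip n (f i) (f j) = (if i = j then 1 else 0)" if "i < n" "j < n" for i j
    using f that unfolding ortho_def by auto
  show ipv: "ip n (\<lambda>a. \<Sum>j<n-m. w j * f (m+j) a) y = (\<Sum>j<n-m. w j * ip n (f (m+j)) y)" for y
    unfolding ip_def by (simp add: sum_distrib_right sum_distrib_left mult_ac) (rule sum.swap)
  show "ip n (\<lambda>a. \<Sum>j<n-m. w j * f (m+j) a) (f k) = 0" if "k < m"
    unfolding ipv using that mn by (intro sum.neutral) (auto simp: fo)
  show "ip n (\<lambda>a. \<Sum>j<n-m. w j * f (m+j) a) (f (m+i)) = w i" if "i < n-m"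
  proof -
    have "(\<Sum>j<n-m. w j * ip n (f (m+j)) (f (m+i))) = (\<Sum>j<n-m. w j * (if i = j then 1 else 0))"
      using that by (intro sum.cong) (auto simp: fo)
    then show ?thesis unfolding ipv using sum_delta_right[OF that] by simp
  qed
qed

lemma onb_expand_tail:
  assumes f: "onb n f" and mn: "m \<le> n" and y: "\<forall>k<m. ip n y (f k) = 0" and a: "a < n"
  shows "y a = (\<Sum>i<n-m. f (m+i) a * ip n y (f (m+i)))"
proof -
  have "y a = (\<Sum>k<m + (n-m). f k a * ip n y (f k))" using onb_expand[OF f a] mn by simp
  also have "\<dots> = (\<Sum>i<n-m. f (m+i) a * ip n y (f (m+i)))" using y by (simp add: sum_lessThan_add)
  finally show ?thesis .
qed

text \<open>If the first \<open>m\<close> vectors of an orthonormal basis are eigenvectors of a Hermitian \<open>M\<close>, then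
  \<open>M\<close> has an eigenvector orthogonal to them: an eigenvector of the compression of \<open>M\<close> to the
  span of the remaining basis vectors (it exists since \<open>\<complex>\<close> is algebraically closed).\<close>
lemma complement_eigenvector:
  assumes h: "herm n M" and mn: "m < n" and f: "onb n f"
    and ev: "\<forall>k<m. \<forall>a<n. mv n M (f k) a = complex_of_real (d k) * f k a"
  shows "\<exists>v c. ip n v v \<noteq> 0 \<and> (\<forall>k<m. ip n v (f k) = 0) \<and> (\<forall>a<n. mv n M v a = c * v a)"
proof -
  define C where "C = mat (n-m) (n-m) (\<lambda>(i,j). ip n (mv n M (f (m+j))) (f (m+i)))"
  have C: "C \<in> carrier_mat (n-m) (n-m)" unfolding C_def by auto
  obtain c w where "eigenvector C w c"
    using spectrum_non_empty[OF C] mn unfolding spectrum_def eigenvalue_def by auto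
  then have wdim: "dim_vec w = n - m" and wnz: "w \<noteq> 0\<^sub>v (n-m)" and Cw: "C *\<^sub>v w = c \<cdot>\<^sub>v w"
    using C unfolding eigenvector_def by auto
  define v where "v = (\<lambda>a. \<Sum>j<n-m. w $ j * f (m+j) a)"
  have v_ip: "\<And>y. ip n v y = (\<Sum>j<n-m. w $ j * ip n (f (m+j)) y)"
    and v_orth: "\<forall>k<m. ip n v (f k) = 0" and v_coef: "\<And>i. i < n-m \<Longrightarrow> ip n v (f (m+i)) = w $ i"
    unfolding v_def using tail_combination[OF f, where m=m and w="\<lambda>j. w $ j"] mn by auto
  have Mv_orth: "\<forall>k<m. ip n (mv n M v) (f k) = 0"
    using herm_complement_invariant[OF h] ev v_orth by blast
  have Mv_coef: "ip n (mv n M v) (f (m+i)) = c * w $ i" if "i < n-m" for i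
  proof -
    have "ip n (mv n M v) (f (m+i)) = (\<Sum>j<n-m. w $ j * ip n (mv n M (f (m+j))) (f (m+i)))"
      unfolding v_def ip_def mv_def
      by (simp add: sum_distrib_right sum_distrib_left mult_ac) (subst sum.swap, subst (2) sum.swap, rule refl)
    also have "\<dots> = (C *\<^sub>v w) $ i"
      using that wdim unfolding C_def by (auto simp: scalar_prod_def atLeast0LessThan mult_ac intro!: sum.cong)
    finally show ?thesis using Cw that wdim by simp
  qed
  have "mv n M v a = c * v a" if "a < n" for a
  proof -
    have "mv n M v a = (\<Sum>i<n-m. f (m+i) a * ip n (mv n M v) (f (m+i)))"
      using onb_expand_tail[OF f _ Mv_orth that] mn by simp
    also have "\<dots> = (\<Sum>i<n-m. f (m+i) a * (c * w $ i))" using Mv_coef by simp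
    also have "\<dots> = c * v a" unfolding v_def by (simp add: sum_distrib_left mult_ac)
    finally show ?thesis .
  qed
  moreover have "ip n v v \<noteq> 0"
  proof
    assume "ip n v v = 0"
    moreover have "ip n v v = ip (n-m) (\<lambda>j. w $ j) (\<lambda>j. w $ j)"
      unfolding v_ip ip_def[of "n-m"] using v_coef by (intro sum.cong refl) (simp add: ip_conj[of n "f _" v])
    ultimately have "w = 0\<^sub>v (n-m)" using wdim ip_self_eq_0 by (intro eq_vecI) auto
    then show False using wnz by simp
  qed
  ultimately show ?thesis using v_orth by blast
qed

lemma spectral_step:
  assumes h: "herm n M" and mn: "m < n" and o: "ortho n m e"
    and ev: "\<forall>k<m. \<forall>a<n. mv n M (e k) a = complex_of_real (d k) * e k a"
  shows "\<exists>v c. ip n v v = 1 \<and> (\<forall>j<m. ip n v (e j) = 0) \<and> (\<forall>a<n. mv n M v a = complex_of_real c * v a)"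
proof -
  obtain f where f: "onb n f" "\<forall>i<m. f i = e i" using extend_ortho[OF o] mn by auto
  have ev_f: "\<forall>k<m. \<forall>a<n. mv n M (f k) a = complex_of_real (d k) * f k a" using ev f(2) by simp
  obtain v c where v: "ip n v v \<noteq> 0" "\<forall>k<m. ip n v (f k) = 0" "\<forall>a<n. mv n M v a = c * v a"
    using complement_eigenvector[OF h mn f(1) ev_f] by blast
  obtain r where r: "c = complex_of_real r" using herm_eigenvalue_real[OF h v(3,1)] by blast
  obtain s :: real where s: "ip n (\<lambda>a. s * v a) (\<lambda>a. s * v a) = 1" using normalize_vec[OF v(1)] by blast
  have "\<forall>j<m. ip n (\<lambda>a. s * v a) (e j) = 0" using v(2) f(2) unfolding ip_scale_left by simp
  moreover have "\<forall>a<n. mv n M (\<lambda>a. s * v a) a = complex_of_real r * (s * v a)"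
    using v(3) unfolding r by (simp add: mv_scale mult_ac)
  ultimately show ?thesis using s by (intro exI[of _ "\<lambda>a. s * v a"] exI[of _ r]) simp
qed

definition eigendecomp :: "nat \<Rightarrow> complex mat \<Rightarrow> (nat \<Rightarrow> nat \<Rightarrow> complex) \<Rightarrow> (nat \<Rightarrow> real) \<Rightarrow> bool" where
  "eigendecomp n M e d \<longleftrightarrow> onb n e \<and>
     (\<forall>a<n. \<forall>b<n. M $$ (a,b) = (\<Sum>k<n. complex_of_real (d k) * e k a * cnj (e k b)))"

lemma eigenbasis_eigendecomp:
  assumes e: "onb n e" and ev: "\<forall>k<n. \<forall>a<n. mv n M (e k) a = complex_of_real (d k) * e k a"
  shows "eigendecomp n M e d"
  unfolding eigendecomp_def
proof (intro conjI e allI impI)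
  fix a b assume ab: "a < n" "b < n"
  have "M $$ (a,b) = (\<Sum>c<n. M $$ (a,c) * (if b = c then 1 else 0))"
    using ab(2) by (rule sum_delta_right[symmetric])
  also have "\<dots> = (\<Sum>c<n. M $$ (a,c) * (\<Sum>k<n. e k c * cnj (e k b)))"
  proof (intro sum.cong refl)
    fix c assume "c \<in> {..<n}"
    then show "M $$ (a,c) * (if b = c then 1 else 0) = M $$ (a,c) * (\<Sum>k<n. e k c * cnj (e k b))"
      using onb_complete[OF e, of c b] ab by auto
  qed
  also have "\<dots> = (\<Sum>k<n. (\<Sum>c<n. M $$ (a,c) * e k c) * cnj (e k b))"
    by (simp add: sum_distrib_left sum_distrib_right mult_ac) (rule sum.swap)
  also have "\<dots> = (\<Sum>k<n. complex_of_real (d k) * e k a * cnj (e k b))"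
    using ev ab unfolding mv_def by (intro sum.cong) auto
  finally show "M $$ (a,b) = (\<Sum>k<n. complex_of_real (d k) * e k a * cnj (e k b))" .
qed

theorem spectral:
  assumes h: "herm n M"
  shows "\<exists>e d. eigendecomp n M e d"
proof -
  have "\<exists>e d. ortho n m e \<and> (\<forall>k<m. \<forall>a<n. mv n M (e k) a = complex_of_real (d k) * e k a)" if "m \<le> n" for m
    using that
  proof (induction m)
    case 0
    then show ?case unfolding ortho_def by auto
  next
    case (Suc m)
    then obtain e d where ed: "ortho n m e" "\<forall>k<m. \<forall>a<n. mv n M (e k) a = complex_of_real (d k) * e k a"
      by auto
    obtain v c where vc: "ip n v v = 1" "\<forall>j<m. ip n v (e j) = 0" "\<forall>a<n. mv n M v a = complex_of_real c * v a"
      using spectral_step[OF h _ ed] Suc.prems by auto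
    have "ip n (e j) v = 0" if "j < m" for j using vc(2) that ip_conj[of n "e j" v] by simp
    then have "ortho n (Suc m) (e(m := v))" using ed(1) vc(1,2) unfolding ortho_def by (auto simp: less_Suc_eq)
    moreover have "\<forall>k<Suc m. \<forall>a<n. mv n M ((e(m := v)) k) a = complex_of_real ((d(m := c)) k) * (e(m := v)) k a"
      using ed(2) vc(3) by (auto simp: less_Suc_eq)
    ultimately show ?case by blast
  qed
  then show ?thesis using eigenbasis_eigendecomp by blast
qed

lemma diagonal_eigendecomp:
  assumes "\<forall>a<n. \<forall>b<n. M $$ (a,b) = (if a = b then complex_of_real (d a) else 0)"
  shows "eigendecomp n M (\<lambda>k a. if k = a then 1 else 0) d"
  unfolding eigendecomp_def ortho_def ip_def
proof (intro conjI allI impI)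
  fix a b assume ab: "a < n" "b < n"
  have "(\<Sum>k<n. (if a = k then 1 else 0) * cnj (if b = k then 1 else 0)) = (\<Sum>k<n. if k = a \<and> k = b then 1 else (0::complex))"
    "(\<Sum>k<n. complex_of_real (d k) * (if k = a then 1 else 0) * cnj (if k = b then 1 else 0))
      = (\<Sum>k<n. if k = a \<and> k = b then complex_of_real (d k) else 0)"
    by (intro sum.cong; simp)+
  then show "(\<Sum>k<n. (if a = k then 1 else 0) * cnj (if b = k then 1 else 0)) = (if a = b then 1 else 0)"
    "M $$ (a,b) = (\<Sum>k<n. complex_of_real (d k) * (if k = a then 1 else 0) * cnj (if k = b then 1 else 0))"
    using assms ab by (simp_all add: sum_diag_block)
qed

lemma eigendecomp_mv:
  assumes "eigendecomp n M e d" "a < n"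
  shows "mv n M x a = (\<Sum>k<n. complex_of_real (d k) * e k a * ip n x (e k))"
proof -
  have "mv n M x a = (\<Sum>b<n. \<Sum>k<n. complex_of_real (d k) * e k a * (cnj (e k b) * x b))"
    unfolding mv_def using assms unfolding eigendecomp_def by (simp add: sum_distrib_left sum_distrib_right mult_ac)
  also have "\<dots> = (\<Sum>k<n. \<Sum>b<n. complex_of_real (d k) * e k a * (cnj (e k b) * x b))" by (rule sum.swap)
  also have "\<dots> = (\<Sum>k<n. complex_of_real (d k) * e k a * ip n x (e k))"
    unfolding ip_def by (simp add: sum_distrib_left mult_ac)
  finally show ?thesis .
qed

lemma eigendecomp_eigvec:
  assumes ed: "eigendecomp n M e d" and k: "k < n" and a: "a < n"
  shows "mv n M (e k) a = complex_of_real (d k) * e k a"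
proof -
  have "mv n M (e k) a = (\<Sum>j<n. complex_of_real (d j) * e j a * (if k = j then 1 else 0))"
    unfolding eigendecomp_mv[OF ed a] using ed k unfolding eigendecomp_def ortho_def by (intro sum.cong) auto
  then show ?thesis using sum_delta_right[OF k] by simp
qed

lemma eigendecomp_rayleigh:
  assumes ed: "eigendecomp n M e d" and k: "k < n"
  shows "ip n (mv n M (e k)) (e k) = complex_of_real (d k)"
proof -
  have "ip n (mv n M (e k)) (e k) = complex_of_real (d k) * ip n (e k) (e k)"
    unfolding ip_def using eigendecomp_eigvec[OF ed k] by (simp add: sum_distrib_left mult_ac)
  then show ?thesis using ed k unfolding eigendecomp_def ortho_def by simp
qed

lemma eigendecomp_quadratic:
  assumes ed: "eigendecomp n M e d"
  shows "ip n (mv n M x) x = complex_of_real (\<Sum>k<n. d k * (cmod (ip n x (e k)))^2)"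
proof -
  have "ip n (mv n M x) x = (\<Sum>a<n. (\<Sum>k<n. complex_of_real (d k) * e k a * ip n x (e k)) * cnj (x a))"
    unfolding ip_def[of n "mv n M x"] using eigendecomp_mv[OF ed] by (intro sum.cong) auto
  also have "\<dots> = (\<Sum>k<n. complex_of_real (d k) * ip n x (e k) * (\<Sum>a<n. e k a * cnj (x a)))"
    by (simp add: sum_distrib_right sum_distrib_left mult_ac) (rule sum.swap)
  also have "\<dots> = (\<Sum>k<n. complex_of_real (d k) * (ip n x (e k) * cnj (ip n x (e k))))"
    unfolding ip_def by (simp add: mult_ac)
  also have "\<dots> = complex_of_real (\<Sum>k<n. d k * (cmod (ip n x (e k)))^2)"
    unfolding of_real_sum by (intro sum.cong) (simp_all, metis complex_norm_square of_real_power of_real_mult)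
  finally show ?thesis .
qed

lemma eigendecomp_trace:
  assumes ed: "eigendecomp n M e d"
  shows "tr n M = complex_of_real (\<Sum>k<n. d k)"
proof -
  have "tr n M = (\<Sum>a<n. \<Sum>k<n. complex_of_real (d k) * e k a * cnj (e k a))"
    unfolding tr_def using ed unfolding eigendecomp_def by simp
  also have "\<dots> = (\<Sum>k<n. complex_of_real (d k) * ip n (e k) (e k))"
    unfolding ip_def by (subst sum.swap) (simp add: sum_distrib_left mult_ac)
  also have "\<dots> = (\<Sum>k<n. complex_of_real (d k))" using ed unfolding eigendecomp_def ortho_def by simp
  finally show ?thesis by simp
qed

lemma eigendecomp_psd_nonneg:
  assumes "eigendecomp n M e d" "psd n M" "k < n"
  shows "0 \<le> d k"
  using eigendecomp_rayleigh[OF assms(1,3)] assms(2) unfolding psd_def by (metis Re_complex_of_real)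

lemma density_spectral:
  assumes "density n M"
  shows "\<exists>e d. eigendecomp n M e d \<and> (\<forall>k<n. 0 \<le> d k) \<and> (\<Sum>k<n. d k) = 1"
proof -
  obtain e d where ed: "eigendecomp n M e d" using spectral assms unfolding density_def by blast
  moreover have "\<forall>k<n. 0 \<le> d k" using eigendecomp_psd_nonneg[OF ed] assms unfolding density_def by blast
  moreover have "(\<Sum>k<n. d k) = 1"
    using eigendecomp_trace[OF ed] assms unfolding density_def by (metis of_real_eq_1_iff)
  ultimately show ?thesis by blast
qed

lemma density_spectral_family:
  assumes "\<And>y. y < R \<Longrightarrow> density n (\<rho> y)"
  shows "\<exists>E L. \<forall>y<R. eigendecomp n (\<rho> y) (E y) (L y) \<and> (\<forall>k<n. 0 \<le> L y k) \<and> (\<Sum>k<n. L y k) = 1"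
proof -
  have "\<forall>y. \<exists>e d. y < R \<longrightarrow> eigendecomp n (\<rho> y) e d \<and> (\<forall>k<n. 0 \<le> d k) \<and> (\<Sum>k<n. d k) = 1"
    using density_spectral assms by blast
  then show ?thesis by metis
qed

definition eta :: "real \<Rightarrow> real" where "eta t = - (t * log 2 t)"

lemma poly_prod_lin_zero:
  "poly (prod_mset (image_mset (\<lambda>a. [:-a,1:]) M)) (b::complex) = 0 \<longleftrightarrow> b \<in># M"
  by (induction M) auto

lemma prod_lin_inj:
  "prod_mset (image_mset (\<lambda>a. [:-a,1:]) M1) = prod_mset (image_mset (\<lambda>a::complex. [:-a,1:]) M2) \<Longrightarrow> M1 = M2"
proof (induction M1 arbitrary: M2)
  case empty
  show ?case
  proof (rule ccontr)
    assume "{#} \<noteq> M2"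
    then obtain b where "b \<in># M2" by (metis multiset_nonemptyE)
    then have "poly (prod_mset (image_mset (\<lambda>a. [:-a,1:]) M2)) b = 0" using poly_prod_lin_zero by blast
    with empty show False by simp
  qed
next
  case (add a M1)
  have "poly (prod_mset (image_mset (\<lambda>a. [:-a,1:]) M2)) a = 0"
    using add.prems[symmetric] poly_prod_lin_zero[of "add_mset a M1" a] by simp
  then have "a \<in># M2" using poly_prod_lin_zero by blast
  then obtain M2' where M2: "M2 = add_mset a M2'" by (metis mset_add)
  have "[:-a,1:] * prod_mset (image_mset (\<lambda>a. [:-a,1:]) M1) = [:-a,1:] * prod_mset (image_mset (\<lambda>a. [:-a,1:]) M2')"
    using add.prems M2 by simp
  then have "prod_mset (image_mset (\<lambda>a. [:-a,1:]) M1) = prod_mset (image_mset (\<lambda>a. [:-a,1:]) M2')"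
    by (subst (asm) mult_left_cancel) auto
  then show ?case using add.IH M2 by simp
qed

lemma eigvals_eq:
  assumes "char_poly A = prod_mset (image_mset (\<lambda>a. [:-a,1:]) M)"
  shows "eigvals A = M"
  unfolding eigvals_def by (rule the_equality, rule assms, metis assms prod_lin_inj)

text \<open>The entropy is read off from any eigendecomposition: \<open>M\<close> is unitarily similar to the
  diagonal matrix of the \<open>d k\<close>, which therefore are its eigenvalues.\<close>
lemma eigendecomp_entropy:
  assumes M: "M \<in> carrier_mat n n" and ed: "eigendecomp n M e d"
  shows "vN_entropy M = (\<Sum>k<n. eta (d k))"
proof -
  let ?U = "basis_mat n e"
  define D where "D = mat n n (\<lambda>(i,j). if i = j then complex_of_real (d i) else 0)"
  have U: "?U \<in> carrier_mat n n" and Uh: "adj ?U \<in> carrier_mat n n" and D: "D \<in> carrier_mat n n"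
    unfolding adj_basis_mat unfolding basis_mat_def D_def by auto
  have e: "onb n e" using ed unfolding eigendecomp_def by simp
  have "M = ?U * D * adj ?U"
  proof (rule eq_matI)
    fix a b assume ab: "a < dim_row (?U * D * adj ?U)" "b < dim_col (?U * D * adj ?U)"
    then have ab': "a < n" "b < n" using U Uh by auto
    have UD: "(?U * D) $$ (a,k) = e k a * complex_of_real (d k)" if "k < n" for k
      using ab' that unfolding basis_mat_def D_def
      by (simp add: scalar_prod_def atLeast0LessThan if_distrib sum.delta cong: if_cong)
    have "(?U * D * adj ?U) $$ (a,b) = (\<Sum>k<n. (?U * D) $$ (a,k) * cnj (e k b))"
      using ab' U D unfolding adj_basis_mat by (simp add: scalar_prod_def atLeast0LessThan)
    also have "\<dots> = M $$ (a,b)" using UD ed ab' unfolding eigendecomp_def by (simp add: mult_ac)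
    finally show "M $$ (a,b) = (?U * D * adj ?U) $$ (a,b)" by simp
  qed (use M U D Uh in auto)
  then have "similar_mat_wit M D ?U (adj ?U)"
    unfolding similar_mat_wit_def Let_def using M U D Uh basis_mat_unitary[OF e] by auto
  then have "char_poly M = char_poly D" using char_poly_similar similar_mat_def by blast
  also have "\<dots> = (\<Prod>a\<leftarrow>diag_mat D. [:- a, 1:])"
    by (rule char_poly_upper_triangular[OF D]) (auto simp: D_def upper_triangular_def)
  also have "diag_mat D = map (\<lambda>i. complex_of_real (d i)) [0..<n]"
    unfolding diag_mat_def D_def by (simp add: list_eq_iff_nth_eq)
  also have "(\<Prod>a\<leftarrow>map (\<lambda>i. complex_of_real (d i)) [0..<n]. [:- a, 1:])
     = prod_mset (image_mset (\<lambda>a. [:-a,1:]) (mset (map (\<lambda>i. complex_of_real (d i)) [0..<n])))"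
    unfolding mset_map[symmetric] prod_mset_prod_list by simp
  finally have "eigvals M = mset (map (\<lambda>i. complex_of_real (d i)) [0..<n])"
    by (rule eigvals_eq)
  then show ?thesis unfolding vN_entropy_def eta_def
    by (simp add: sum_unfold_sum_mset image_mset.compositionality o_def atLeast0LessThan)
qed

section \<open>Scalar inequalities for \<open>eta t = - t log t\<close>\<close>

lemma log2_le: "x > 0 \<Longrightarrow> log 2 x \<le> (x - 1) / ln 2"
proof -
  assume x: "x > 0"
  have "ln x \<le> x - 1" using ln_le_minus_one x by simp
  then show ?thesis unfolding log_def by (simp add: divide_right_mono)
qed

lemma jensen_log:
  fixes P s :: "nat \<Rightarrow> real"
  assumes P: "\<And>j. j < N \<Longrightarrow> P j \<ge> 0" and P1: "(\<Sum>j<N. P j) = 1"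
    and s: "\<And>j. j < N \<Longrightarrow> P j > 0 \<Longrightarrow> s j > 0" and s0: "\<And>j. j < N \<Longrightarrow> s j \<ge> 0"
  shows "(\<Sum>j<N. P j * s j) > 0 \<and> (\<Sum>j<N. P j * log 2 (s j)) \<le> log 2 (\<Sum>j<N. P j * s j)"
proof -
  define t where "t = (\<Sum>j<N. P j * s j)"
  obtain j0 where j0: "j0 < N" "P j0 > 0"
  proof (rule ccontr)
    assume "\<not> thesis"
    then have "\<forall>j<N. P j = 0" using P that by force
    then show False using P1 by simp
  qed
  have "t \<ge> P j0 * s j0" unfolding t_def
    using j0 P s0 by (intro member_le_sum) (auto intro: mult_nonneg_nonneg)
  moreover have "P j0 * s j0 > 0" using j0 s by simp
  ultimately have tpos: "t > 0" by linarith
  have trm: "P j * (log 2 (s j) - log 2 t) \<le> P j * (s j / t - 1) / ln 2" if "j < N" for j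
  proof (cases "P j > 0")
    case True
    then have sj: "s j > 0" using s that by auto
    have "log 2 (s j) - log 2 t = log 2 (s j / t)" using sj tpos by (simp add: log_divide)
    also have "\<dots> \<le> (s j / t - 1) / ln 2" using log2_le sj tpos by simp
    finally have "P j * (log 2 (s j) - log 2 t) \<le> P j * ((s j / t - 1) / ln 2)"
      using True by (intro mult_left_mono) auto
    then show ?thesis by simp
  next
    case False
    then have "P j = 0" using P that by force
    then show ?thesis by simp
  qed
  have "(\<Sum>j<N. P j * (log 2 (s j) - log 2 t)) \<le> (\<Sum>j<N. P j * (s j / t - 1) / ln 2)"
    by (rule sum_mono) (use trm in auto)
  also have "\<dots> = ((\<Sum>j<N. P j * s j) / t - (\<Sum>j<N. P j)) / ln 2"
    by (simp add: sum_divide_distrib[symmetric] sum_subtractf right_diff_distrib)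
  also have "\<dots> = 0" using tpos P1 unfolding t_def by simp
  finally have "(\<Sum>j<N. P j * log 2 (s j)) - (\<Sum>j<N. P j) * log 2 t \<le> 0"
    by (simp add: right_diff_distrib sum_subtractf sum_distrib_right)
  then show ?thesis using P1 tpos unfolding t_def by simp
qed

lemma gibbs:
  fixes l t :: "nat \<Rightarrow> real"
  assumes l: "\<And>i. i < N \<Longrightarrow> l i \<ge> 0" and l1: "(\<Sum>i<N. l i) = 1"
    and t: "\<And>i. i < N \<Longrightarrow> t i \<ge> 0" and t1: "(\<Sum>i<N. t i) \<le> 1"
    and lt: "\<And>i. i < N \<Longrightarrow> l i > 0 \<Longrightarrow> t i > 0"
  shows "(\<Sum>i<N. l i * log 2 (t i)) \<le> (\<Sum>i<N. l i * log 2 (l i))"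
proof -
  have trm: "l i * (log 2 (t i) - log 2 (l i)) \<le> (t i - l i) / ln 2" if "i < N" for i
  proof (cases "l i > 0")
    case True
    then have ti: "t i > 0" using lt that by auto
    have "log 2 (t i) - log 2 (l i) = log 2 (t i / l i)" using ti True by (simp add: log_divide)
    also have "\<dots> \<le> (t i / l i - 1) / ln 2" using log2_le ti True by simp
    finally have "l i * (log 2 (t i) - log 2 (l i)) \<le> l i * ((t i / l i - 1) / ln 2)"
      using True by (intro mult_left_mono) auto
    also have "\<dots> = (t i - l i) / ln 2" using True by (simp add: field_simps)
    finally show ?thesis .
  next
    case False
    then have "l i = 0" using l that by force
    then show ?thesis using t that by simp
  qed
  have "(\<Sum>i<N. l i * (log 2 (t i) - log 2 (l i))) \<le> (\<Sum>i<N. (t i - l i) / ln 2)"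
    by (rule sum_mono) (use trm in auto)
  also have "\<dots> = ((\<Sum>i<N. t i) - (\<Sum>i<N. l i)) / ln 2"
    by (simp add: sum_divide_distrib[symmetric] sum_subtractf)
  also have "\<dots> \<le> 0" using t1 l1 by (simp add: divide_nonpos_pos)
  finally show ?thesis by (simp add: right_diff_distrib sum_subtractf)
qed

lemma eta_mult: "p \<ge> 0 \<Longrightarrow> l \<ge> 0 \<Longrightarrow> eta (p * l) = l * eta p + p * eta l"
proof -
  assume p: "p \<ge> 0" and l: "l \<ge> 0"
  show ?thesis
  proof (cases "p = 0 \<or> l = 0")
    case True
    then show ?thesis unfolding eta_def by auto
  next
    case False
    then have "p > 0" "l > 0" using p l by auto
    then show ?thesis unfolding eta_def by (simp add: log_mult algebra_simps)
  qed
qed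

text \<open>A crude bound, used only to see that mutual information is bounded.\<close>
lemma eta_bounds: "0 \<le> t \<Longrightarrow> t \<le> 1 \<Longrightarrow> 0 \<le> eta t \<and> eta t \<le> 2"
proof -
  assume t0: "0 \<le> t" and t1: "t \<le> 1"
  show ?thesis
  proof (cases "t = 0")
    case True then show ?thesis unfolding eta_def by simp
  next
    case False
    then have tp: "t > 0" using t0 by simp
    have "log 2 t \<le> 0" using tp t1 by simp
    then have nn: "0 \<le> eta t" unfolding eta_def using t0 by (simp add: mult_nonneg_nonpos)
    have "ln (1/t) \<le> 1/t - 1" using tp by (intro ln_le_minus_one) simp
    then have "- ln t \<le> 1/t - 1" using tp by (simp add: ln_div)
    then have "t * (- ln t) \<le> t * (1/t - 1)" using tp by (intro mult_left_mono) auto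
    then have "- (t * ln t) \<le> 1 - t" using tp by (simp add: algebra_simps)
    moreover have "ln 2 \<ge> (1::real)/2"
    proof -
      have "ln (1/2::real) \<le> 1/2 - 1" by (rule ln_le_minus_one) simp
      then show ?thesis by (simp add: ln_div)
    qed
    ultimately have "- (t * ln t) / ln 2 \<le> 2"
    proof -
      assume a1: "- (t * ln t) \<le> 1 - t" and a2: "ln 2 \<ge> (1::real)/2"
      have l2: "ln (2::real) > 0" by simp
      have "- (t * ln t) / ln 2 \<le> 1 / ln 2" using a1 t0 l2 by (intro divide_right_mono) auto
      also have "1 / ln 2 \<le> (2::real)" using a2 l2 by (simp add: divide_le_eq)
      finally show ?thesis .
    qed
    then show ?thesis using nn unfolding eta_def log_def by (simp add: field_simps)
  qed
qed

text \<open>One step of the concavity argument: push a probability vector \<open>lam\<close> through a doubly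
  stochastic matrix \<open>P\<close>; its entropy is at most its cross entropy against the distribution \<open>s\<close>
  (combining Jensen's inequality for each row with Gibbs' inequality).\<close>
lemma eta_le_cross_entropy:
  fixes lam s :: "nat \<Rightarrow> real" and P :: "nat \<Rightarrow> nat \<Rightarrow> real"
  assumes lam: "\<And>i. i < N \<Longrightarrow> lam i \<ge> 0" and lam1: "(\<Sum>i<N. lam i) = 1"
    and P: "\<And>i j. i < N \<Longrightarrow> j < N \<Longrightarrow> P i j \<ge> 0"
    and Prow: "\<And>i. i < N \<Longrightarrow> (\<Sum>j<N. P i j) = 1"
    and Pcol: "\<And>j. j < N \<Longrightarrow> (\<Sum>i<N. P i j) = 1"
    and s0: "\<And>j. j < N \<Longrightarrow> s j \<ge> 0" and s1: "(\<Sum>j<N. s j) = 1"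
    and spos: "\<And>i j. i < N \<Longrightarrow> j < N \<Longrightarrow> lam i > 0 \<Longrightarrow> P i j > 0 \<Longrightarrow> s j > 0"
  shows "(\<Sum>i<N. eta (lam i)) \<le> (\<Sum>i<N. lam i * (\<Sum>j<N. P i j * (- log 2 (s j))))"
proof -
  define t where "t i = (\<Sum>j<N. P i j * s j)" for i
  have jen: "(\<Sum>j<N. P i j * log 2 (s j)) \<le> log 2 (t i)" and tpos: "t i > 0"
    if i: "i < N" "lam i > 0" for i
    using jensen_log[of N "P i" s] P[OF i(1)] Prow[OF i(1)] spos[OF i(1) _ i(2)] s0
    unfolding t_def by auto
  have t0: "t i \<ge> 0" if "i < N" for i unfolding t_def using P that s0 by (intro sum_nonneg mult_nonneg_nonneg) auto
  have "(\<Sum>i<N. t i) = (\<Sum>j<N. (\<Sum>i<N. P i j) * s j)"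
    unfolding t_def by (simp add: sum_distrib_right) (rule sum.swap)
  then have tsum: "(\<Sum>i<N. t i) \<le> 1" using Pcol s1 by simp
  have "(\<Sum>i<N. eta (lam i)) = - (\<Sum>i<N. lam i * log 2 (lam i))"
    unfolding eta_def by (simp add: sum_negf)
  also have "\<dots> \<le> - (\<Sum>i<N. lam i * log 2 (t i))"
    using gibbs[of N lam t] lam lam1 t0 tsum tpos by simp
  also have "\<dots> \<le> - (\<Sum>i<N. lam i * (\<Sum>j<N. P i j * log 2 (s j)))"
  proof -
    have "lam i * (\<Sum>j<N. P i j * log 2 (s j)) \<le> lam i * log 2 (t i)" if "i < N" for i
    proof (cases "lam i > 0")
      case True
      then show ?thesis using jen[OF that True] by (intro mult_left_mono) auto
    next
      case False
      then show ?thesis using lam[OF that] by simp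
    qed
    then have "(\<Sum>i<N. lam i * (\<Sum>j<N. P i j * log 2 (s j))) \<le> (\<Sum>i<N. lam i * log 2 (t i))"
      by (intro sum_mono) auto
    then show ?thesis by simp
  qed
  also have "\<dots> = (\<Sum>i<N. lam i * (\<Sum>j<N. P i j * (- log 2 (s j))))"
    by (simp add: sum_negf)
  finally show ?thesis .
qed

text \<open>The scalar core of concavity: mixing the spectra \<open>lam y\<close> through doubly stochastic
  transition matrices \<open>P y\<close> with weights \<open>q\<close> can only increase entropy.\<close>
lemma concave_mixing:
  fixes q :: "nat \<Rightarrow> real" and lam :: "nat \<Rightarrow> nat \<Rightarrow> real" and P :: "nat \<Rightarrow> nat \<Rightarrow> nat \<Rightarrow> real"
    and s :: "nat \<Rightarrow> real"
  assumes q: "\<And>y. y < R \<Longrightarrow> q y \<ge> 0" and q1: "(\<Sum>y<R. q y) = 1"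
    and lam: "\<And>y i. y < R \<Longrightarrow> i < N \<Longrightarrow> lam y i \<ge> 0" and lam1: "\<And>y. y < R \<Longrightarrow> (\<Sum>i<N. lam y i) = 1"
    and P: "\<And>y i j. y < R \<Longrightarrow> i < N \<Longrightarrow> j < N \<Longrightarrow> P y i j \<ge> 0"
    and Prow: "\<And>y i. y < R \<Longrightarrow> i < N \<Longrightarrow> (\<Sum>j<N. P y i j) = 1"
    and Pcol: "\<And>y j. y < R \<Longrightarrow> j < N \<Longrightarrow> (\<Sum>i<N. P y i j) = 1"
    and s: "\<And>j. j < N \<Longrightarrow> s j = (\<Sum>y<R. q y * (\<Sum>i<N. lam y i * P y i j))"
  shows "(\<Sum>y<R. q y * (\<Sum>i<N. eta (lam y i))) \<le> (\<Sum>j<N. eta (s j))"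
proof -
  have s0: "s j \<ge> 0" if "j < N" for j
    unfolding s[OF that] using q lam P that by (intro sum_nonneg mult_nonneg_nonneg) auto
  have sbig: "s j \<ge> q y * (lam y i * P y i j)" if "j < N" "y < R" "i < N" for j y i
  proof -
    have "q y * (lam y i * P y i j) \<le> q y * (\<Sum>i<N. lam y i * P y i j)"
      using that q lam P by (intro mult_left_mono member_le_sum) auto
    also have "\<dots> \<le> s j" unfolding s[OF that(1)]
      using that q lam P by (intro member_le_sum[of y "{..<R}" "\<lambda>y. q y * (\<Sum>i<N. lam y i * P y i j)"]
          mult_nonneg_nonneg sum_nonneg) auto
    finally show ?thesis .
  qed
  have ssum: "(\<Sum>j<N. s j) = 1"
  proof -
    have "(\<Sum>j<N. s j) = (\<Sum>j<N. \<Sum>y<R. \<Sum>i<N. q y * lam y i * P y i j)"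
      using s by (simp add: sum_distrib_left mult_ac)
    also have "\<dots> = (\<Sum>y<R. \<Sum>i<N. \<Sum>j<N. q y * lam y i * P y i j)"
      by (rule sum_rotate3[symmetric])
    also have "\<dots> = (\<Sum>y<R. q y)"
      using Prow lam1 by (simp add: sum_distrib_left[symmetric])
    finally show ?thesis using q1 by simp
  qed
  have per_y: "q y * (\<Sum>i<N. eta (lam y i)) \<le> q y * (\<Sum>i<N. lam y i * (\<Sum>j<N. P y i j * (- log 2 (s j))))"
    if y: "y < R" for y
  proof (cases "q y > 0")
    case True
    have "s j > 0" if "i < N" "j < N" "lam y i > 0" "P y i j > 0" for i j
      using sbig[OF that(2) y that(1)] True that(3,4) by (smt (verit) mult_pos_pos)
    then show ?thesis using True
      by (intro mult_left_mono eta_le_cross_entropy) (use lam lam1 P Prow Pcol s0 ssum y in auto)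
  qed (use q y in force)
  have "(\<Sum>y<R. q y * (\<Sum>i<N. eta (lam y i))) \<le> (\<Sum>y<R. q y * (\<Sum>i<N. lam y i * (\<Sum>j<N. P y i j * (- log 2 (s j)))))"
    by (intro sum_mono) (use per_y in auto)
  also have "\<dots> = (\<Sum>y<R. \<Sum>i<N. \<Sum>j<N. q y * lam y i * P y i j * (- log 2 (s j)))"
    by (simp add: sum_distrib_left mult_ac)
  also have "\<dots> = (\<Sum>j<N. \<Sum>y<R. \<Sum>i<N. q y * lam y i * P y i j * (- log 2 (s j)))"
    by (rule sum_rotate3)
  also have "\<dots> = (\<Sum>j<N. eta (s j))"
    using s unfolding eta_def by (simp add: sum_distrib_left sum_distrib_right mult_ac sum_negf)
  finally show ?thesis .
qed

section \<open>Concavity of the von Neumann entropy\<close>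

lemma onb_overlap_stochastic:
  assumes g: "onb n g" and f: "onb n f"
  shows "i < n \<Longrightarrow> (\<Sum>j<n. (cmod (ip n (g i) (f j)))^2) = 1"
    and "j < n \<Longrightarrow> (\<Sum>i<n. (cmod (ip n (g i) (f j)))^2) = 1"
proof -
  show "(\<Sum>j<n. (cmod (ip n (g i) (f j)))^2) = 1" if "i < n"
    using parseval[OF f, of "g i"] g that unfolding ortho_def by (metis of_real_eq_1_iff)
  show "(\<Sum>i<n. (cmod (ip n (g i) (f j)))^2) = 1" if "j < n"
  proof -
    have "(\<Sum>i<n. (cmod (ip n (g i) (f j)))^2) = (\<Sum>i<n. (cmod (ip n (f j) (g i)))^2)"
      by (subst ip_conj) simp
    then show ?thesis using parseval[OF g, of "f j"] f that unfolding ortho_def by (metis of_real_eq_1_iff)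
  qed
qed

lemma ip_mv_comb:
  fixes \<rho> :: "nat \<Rightarrow> complex mat" and q :: "nat \<Rightarrow> real"
  assumes "\<forall>a<n. \<forall>b<n. S $$ (a,b) = (\<Sum>y<R. complex_of_real (q y) * \<rho> y $$ (a,b))"
  shows "ip n (mv n S x) x = (\<Sum>y<R. complex_of_real (q y) * ip n (mv n (\<rho> y) x) x)"
proof -
  have "mv n S x a = (\<Sum>y<R. complex_of_real (q y) * mv n (\<rho> y) x a)" if "a < n" for a
  proof -
    have "mv n S x a = (\<Sum>b<n. \<Sum>y<R. complex_of_real (q y) * (\<rho> y $$ (a,b) * x b))"
      unfolding mv_def using assms that by (simp add: sum_distrib_right sum_distrib_left mult_ac)
    also have "\<dots> = (\<Sum>y<R. \<Sum>b<n. complex_of_real (q y) * (\<rho> y $$ (a,b) * x b))" by (rule sum.swap)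
    finally show ?thesis unfolding mv_def by (simp add: sum_distrib_left)
  qed
  then have "ip n (mv n S x) x = (\<Sum>a<n. (\<Sum>y<R. complex_of_real (q y) * mv n (\<rho> y) x a) * cnj (x a))"
    unfolding ip_def[of n "mv n S x"] by (intro sum.cong) auto
  also have "\<dots> = (\<Sum>y<R. \<Sum>a<n. complex_of_real (q y) * (mv n (\<rho> y) x a * cnj (x a)))"
    by (simp add: sum_distrib_right sum_distrib_left mult_ac) (rule sum.swap)
  also have "\<dots> = (\<Sum>y<R. complex_of_real (q y) * ip n (mv n (\<rho> y) x) x)"
    unfolding ip_def by (simp add: sum_distrib_left)
  finally show ?thesis .
qed

lemma mixture_eigenvalues:
  fixes \<rho> :: "nat \<Rightarrow> complex mat" and q :: "nat \<Rightarrow> real"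
  assumes ed: "\<And>y. y < R \<Longrightarrow> eigendecomp n (\<rho> y) (A y) (L y)"
    and fs: "eigendecomp n S f s" and j: "j < n"
    and Sdef: "\<forall>a<n. \<forall>b<n. S $$ (a,b) = (\<Sum>y<R. complex_of_real (q y) * \<rho> y $$ (a,b))"
  shows "s j = (\<Sum>y<R. q y * (\<Sum>i<n. L y i * (cmod (ip n (A y i) (f j)))^2))"
proof -
  have "complex_of_real (s j) = ip n (mv n S (f j)) (f j)" using eigendecomp_rayleigh[OF fs j] ..
  also have "\<dots> = (\<Sum>y<R. complex_of_real (q y) * ip n (mv n (\<rho> y) (f j)) (f j))"
    by (rule ip_mv_comb[OF Sdef])
  also have "\<dots> = (\<Sum>y<R. complex_of_real (q y) * complex_of_real (\<Sum>i<n. L y i * (cmod (ip n (A y i) (f j)))^2))"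
  proof (rule sum.cong[OF refl])
    fix y assume "y \<in> {..<R}"
    then have "ip n (mv n (\<rho> y) (f j)) (f j) = complex_of_real (\<Sum>i<n. L y i * (cmod (ip n (f j) (A y i)))^2)"
      using ed by (blast intro: eigendecomp_quadratic)
    moreover have "cmod (ip n (f j) (A y i)) = cmod (ip n (A y i) (f j))" for i by (subst ip_conj) simp
    ultimately show "complex_of_real (q y) * ip n (mv n (\<rho> y) (f j)) (f j)
        = complex_of_real (q y) * complex_of_real (\<Sum>i<n. L y i * (cmod (ip n (A y i) (f j)))^2)"
      by simp
  qed
  also have "\<dots> = complex_of_real (\<Sum>y<R. q y * (\<Sum>i<n. L y i * (cmod (ip n (A y i) (f j)))^2))" by simp
  finally show ?thesis by (simp only: of_real_eq_iff)
qed

theorem entropy_concave: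
  fixes \<rho> :: "nat \<Rightarrow> complex mat" and q :: "nat \<Rightarrow> real"
  assumes rho: "\<And>y. y < R \<Longrightarrow> density n (\<rho> y)"
    and q: "\<And>y. y < R \<Longrightarrow> q y \<ge> 0" and q1: "(\<Sum>y<R. q y) = 1"
    and S: "S \<in> carrier_mat n n" "herm n S"
    and Sdef: "\<forall>a<n. \<forall>b<n. S $$ (a,b) = (\<Sum>y<R. complex_of_real (q y) * \<rho> y $$ (a,b))"
  shows "(\<Sum>y<R. q y * vN_entropy (\<rho> y)) \<le> vN_entropy S"
proof -
  obtain A L where AL: "\<forall>y<R. eigendecomp n (\<rho> y) (A y) (L y) \<and> (\<forall>k<n. 0 \<le> L y k) \<and> (\<Sum>k<n. L y k) = 1"
    using density_spectral_family[of R n \<rho>, OF rho] by blast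
  obtain f s where fs: "eigendecomp n S f s" using spectral[OF S(2)] by blast
  have A: "onb n (A y)" if "y < R" for y using AL that unfolding eigendecomp_def by blast
  have f: "onb n f" using fs unfolding eigendecomp_def by blast
  define P where "P y i j = (cmod (ip n (A y i) (f j)))^2" for y i j
  have s: "s j = (\<Sum>y<R. q y * (\<Sum>i<n. L y i * P y i j))" if "j < n" for j
    unfolding P_def using mixture_eigenvalues[where A = A and L = L, OF _ fs that Sdef] AL by blast
  have L0: "\<And>y i. y < R \<Longrightarrow> i < n \<Longrightarrow> 0 \<le> L y i" and L1: "\<And>y. y < R \<Longrightarrow> (\<Sum>i<n. L y i) = 1"
    using AL by blast+
  have Prow: "\<And>y i. y < R \<Longrightarrow> i < n \<Longrightarrow> (\<Sum>j<n. P y i j) = 1"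
    and Pcol: "\<And>y j. y < R \<Longrightarrow> j < n \<Longrightarrow> (\<Sum>i<n. P y i j) = 1"
    unfolding P_def using onb_overlap_stochastic[OF A f] by blast+
  have "(\<Sum>y<R. q y * (\<Sum>i<n. eta (L y i))) \<le> (\<Sum>j<n. eta (s j))"
    by (rule concave_mixing[where P = P, OF q q1 L0 L1 _ Prow Pcol s]) (auto simp: P_def)
  moreover have "vN_entropy (\<rho> y) = (\<Sum>i<n. eta (L y i))" if "y < R" for y
    using rho[OF that] AL that unfolding density_def by (intro eigendecomp_entropy) auto
  then have "(\<Sum>y<R. q y * vN_entropy (\<rho> y)) = (\<Sum>y<R. q y * (\<Sum>i<n. eta (L y i)))"
    by (intro sum.cong) auto
  ultimately show ?thesis using eigendecomp_entropy[OF S(1) fs] by simp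
qed

section \<open>Mixtures of vector states and the two marginals of a pure state\<close>

text \<open>Every reduced
  state of a pure state has this form.\<close>
definition gram_mat :: "nat \<Rightarrow> nat \<Rightarrow> (nat \<Rightarrow> nat \<Rightarrow> complex) \<Rightarrow> complex mat" where
  "gram_mat n K G = mat n n (\<lambda>(i,j). \<Sum>k<K. G k i * cnj (G k j))"

lemma gram_mat_entry: "i < n \<Longrightarrow> j < n \<Longrightarrow> gram_mat n K G $$ (i,j) = (\<Sum>k<K. G k i * cnj (G k j))"
  unfolding gram_mat_def by simp

lemma gram_mat_carrier: "gram_mat n K G \<in> carrier_mat n n"
  unfolding gram_mat_def by simp

lemma gram_mat_herm: "herm n (gram_mat n K G)"
  unfolding herm_def by (simp add: gram_mat_entry mult.commute)

lemma gram_mat_psd: "psd n (gram_mat n K G)"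
  unfolding psd_def
proof
  fix x
  define h where "h k = (\<Sum>j<n. cnj (G k j) * x j)" for k
  have "ip n (mv n (gram_mat n K G) x) x = (\<Sum>i<n. \<Sum>j<n. \<Sum>k<K. G k i * cnj (x i) * (cnj (G k j) * x j))"
    unfolding ip_def mv_def by (simp add: gram_mat_entry sum_distrib_right sum_distrib_left mult_ac)
  also have "\<dots> = (\<Sum>k<K. \<Sum>i<n. \<Sum>j<n. G k i * cnj (x i) * (cnj (G k j) * x j))"
    by (rule sum_rotate3)
  also have "\<dots> = (\<Sum>k<K. cnj (h k) * h k)"
    unfolding h_def by (simp add: sum_distrib_left sum_distrib_right mult_ac)
  also have "\<dots> = complex_of_real (\<Sum>k<K. (cmod (h k))^2)"
    unfolding of_real_sum by (intro sum.cong) (simp_all, metis complex_norm_square of_real_power mult.commute)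
  finally show "0 \<le> Re (ip n (mv n (gram_mat n K G) x) x)" by (simp add: sum_nonneg)
qed

lemma gram_mat_trace: "tr n (gram_mat n K G) = (\<Sum>k<K. \<Sum>i<n. G k i * cnj (G k i))"
  unfolding tr_def by (simp add: gram_mat_entry) (rule sum.swap)

lemma gram_mat_density:
  "(\<Sum>k<K. \<Sum>i<n. G k i * cnj (G k i)) = 1 \<Longrightarrow> density n (gram_mat n K G)"
  unfolding density_def using gram_mat_carrier gram_mat_herm gram_mat_psd gram_mat_trace by simp

lemma eta_sum_match:
  fixes T :: "nat \<Rightarrow> nat \<Rightarrow> real" and s t :: "nat \<Rightarrow> real"
  assumes row: "\<And>k. k < m \<Longrightarrow> (\<Sum>j<l. T k j) = s k"
    and col: "\<And>j. j < l \<Longrightarrow> (\<Sum>k<m. T k j) = t j"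
    and match: "\<And>k j. k < m \<Longrightarrow> j < l \<Longrightarrow> T k j \<noteq> 0 \<Longrightarrow> s k = t j"
  shows "(\<Sum>k<m. eta (s k)) = (\<Sum>j<l. eta (t j))"
proof -
  have "(\<Sum>k<m. eta (s k)) = (\<Sum>k<m. \<Sum>j<l. T k j * (- log 2 (s k)))"
    unfolding eta_def using row by (intro sum.cong refl) (subst sum_distrib_right[symmetric], simp)
  also have "\<dots> = (\<Sum>k<m. \<Sum>j<l. T k j * (- log 2 (t j)))"
    using match by (intro sum.cong refl) (metis lessThan_iff mult_eq_0_iff)
  also have "\<dots> = (\<Sum>j<l. \<Sum>k<m. T k j * (- log 2 (t j)))" by (rule sum.swap)
  also have "\<dots> = (\<Sum>j<l. eta (t j))"
    unfolding eta_def using col by (intro sum.cong refl) (subst sum_distrib_right[symmetric], simp)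
  finally show ?thesis .
qed

text \<open>View \<open>W\<close> as a pure state on \<open>\<complex>\<^sup>m \<otimes> \<complex>\<^sup>l\<close>, with marginals \<open>gram_mat m l (\<lambda>b a. W a b)\<close> and
  \<open>gram_mat l m W\<close>.\<close>
lemma marginal_transfer_eigvec:
  fixes W :: "nat \<Rightarrow> nat \<Rightarrow> complex"
  assumes gev: "\<forall>b<l. mv l (gram_mat l m W) g b = complex_of_real t * g b" and a: "a < m"
  shows "mv m (gram_mat m l (\<lambda>b a. W a b)) (\<lambda>a. \<Sum>b<l. W a b * cnj (g b)) a
           = complex_of_real t * (\<Sum>b<l. W a b * cnj (g b))"
proof -
  let ?Y = "gram_mat l m W"
  have Yg: "(\<Sum>b<l. ?Y $$ (c,b) * g b) = complex_of_real t * g c" if "c < l" for c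
    using gev that unfolding mv_def by simp
  have "mv m (gram_mat m l (\<lambda>b a. W a b)) (\<lambda>a. \<Sum>b<l. W a b * cnj (g b)) a
      = (\<Sum>a'<m. (\<Sum>c<l. W a c * cnj (W a' c)) * (\<Sum>b<l. W a' b * cnj (g b)))"
    unfolding mv_def using a by (simp add: gram_mat_entry)
  also have "\<dots> = (\<Sum>a'<m. \<Sum>c<l. \<Sum>b<l. W a c * (cnj (W a' c) * W a' b * cnj (g b)))"
    by (simp add: sum_distrib_left sum_distrib_right mult_ac)
  also have "\<dots> = (\<Sum>c<l. \<Sum>b<l. \<Sum>a'<m. W a c * (cnj (W a' c) * W a' b * cnj (g b)))"
    by (rule sum_rotate3[where f = "\<lambda>c b a'. W a c * (cnj (W a' c) * W a' b * cnj (g b))", symmetric])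
  also have "\<dots> = (\<Sum>c<l. W a c * cnj (\<Sum>b<l. ?Y $$ (c,b) * g b))"
  proof (rule sum.cong[OF refl])
    fix c assume c: "c \<in> {..<l}"
    have "(\<Sum>b<l. \<Sum>a'<m. W a c * (cnj (W a' c) * W a' b * cnj (g b)))
        = W a c * (\<Sum>b<l. cnj (\<Sum>a'<m. W a' c * cnj (W a' b)) * cnj (g b))"
      by (simp add: sum_distrib_left sum_distrib_right mult_ac)
    also have "\<dots> = W a c * cnj (\<Sum>b<l. ?Y $$ (c,b) * g b)" using c by (simp add: gram_mat_entry)
    finally show "(\<Sum>b<l. \<Sum>a'<m. W a c * (cnj (W a' c) * W a' b * cnj (g b)))
        = W a c * cnj (\<Sum>b<l. ?Y $$ (c,b) * g b)" .
  qed
  also have "\<dots> = (\<Sum>c<l. W a c * cnj (complex_of_real t * g c))" using Yg by simp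
  also have "\<dots> = complex_of_real t * (\<Sum>b<l. W a b * cnj (g b))" by (simp add: sum_distrib_left mult_ac)
  finally show ?thesis .
qed

lemma marginal_transfer_norm:
  fixes W :: "nat \<Rightarrow> nat \<Rightarrow> complex"
  assumes gev: "\<forall>b<l. mv l (gram_mat l m W) g b = complex_of_real t * g b" and gg: "ip l g g = 1"
  shows "ip m (\<lambda>a. \<Sum>b<l. W a b * cnj (g b)) (\<lambda>a. \<Sum>b<l. W a b * cnj (g b)) = complex_of_real t"
proof -
  let ?Y = "gram_mat l m W"
  define r where "r a = (\<Sum>b<l. W a b * cnj (g b))" for a
  have "ip m r r = (\<Sum>a<m. (\<Sum>b<l. W a b * cnj (g b)) * cnj (r a))"
    unfolding ip_def by (rule sum.cong) (simp_all add: r_def)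
  also have "\<dots> = (\<Sum>b<l. cnj (g b) * (\<Sum>a<m. W a b * cnj (r a)))"
    by (simp add: sum_distrib_left sum_distrib_right mult_ac) (rule sum.swap)
  also have "\<dots> = (\<Sum>b<l. cnj (g b) * (\<Sum>c<l. ?Y $$ (b,c) * g c))"
  proof (rule sum.cong[OF refl])
    fix b assume b: "b \<in> {..<l}"
    have "(\<Sum>a<m. W a b * cnj (r a)) = (\<Sum>a<m. \<Sum>c<l. W a b * cnj (W a c) * g c)"
      unfolding r_def by (simp add: sum_distrib_left mult_ac)
    also have "\<dots> = (\<Sum>c<l. \<Sum>a<m. W a b * cnj (W a c) * g c)" by (rule sum.swap)
    also have "\<dots> = (\<Sum>c<l. ?Y $$ (b,c) * g c)" using b by (simp add: gram_mat_entry sum_distrib_right)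
    finally show "cnj (g b) * (\<Sum>a<m. W a b * cnj (r a)) = cnj (g b) * (\<Sum>c<l. ?Y $$ (b,c) * g c)" by simp
  qed
  also have "\<dots> = complex_of_real t * ip l g g"
    unfolding ip_def using gev unfolding mv_def by (simp add: sum_distrib_left mult_ac)
  finally show ?thesis using gg unfolding r_def by simp
qed

text \<open>The two marginals of a pure state have the same entropy (Schmidt decomposition): the
  overlaps of their eigenbases, transported through \<open>W\<close>, match the two spectra.\<close>
theorem pure_marginals_entropy:
  fixes W :: "nat \<Rightarrow> nat \<Rightarrow> complex"
  shows "vN_entropy (gram_mat m l (\<lambda>b a. W a b)) = vN_entropy (gram_mat l m W)"
proof -
  let ?X = "gram_mat m l (\<lambda>b a. W a b)" and ?Y = "gram_mat l m W"
  obtain e s where es: "eigendecomp m ?X e s" using spectral gram_mat_herm by blast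
  obtain g t where gt: "eigendecomp l ?Y g t" using spectral gram_mat_herm by blast
  have e: "onb m e" and g: "onb l g" using es gt unfolding eigendecomp_def by auto
  have ee: "ip m (e k) (e k) = 1" if "k < m" for k using e that unfolding ortho_def by auto
  have gg: "ip l (g j) (g j) = 1" if "j < l" for j using g that unfolding ortho_def by auto
  define r where "r j a = (\<Sum>b<l. W a b * cnj (g j b))" for j a
  define u where "u k b = (\<Sum>a<m. W a b * cnj (e k a))" for k b
  define z where "z k j = ip m (r j) (e k)" for k j
  have r: "\<forall>a<m. mv m ?X (r j) a = complex_of_real (t j) * r j a" "ip m (r j) (r j) = complex_of_real (t j)"
    if "j < l" for j
    unfolding r_def using marginal_transfer_eigvec[of l m W "g j" "t j"] marginal_transfer_norm[of l m W "g j" "t j"]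
      eigendecomp_eigvec[OF gt that] gg[OF that] by auto
  have u: "ip l (u k) (u k) = complex_of_real (s k)" if "k < m" for k
    unfolding u_def using marginal_transfer_norm[of m l "\<lambda>b a. W a b" "e k" "s k"]
      eigendecomp_eigvec[OF es that] ee[OF that] by auto
  have zu: "z k j = ip l (u k) (g j)" for k j
    unfolding z_def ip_def r_def u_def
    by (simp add: sum_distrib_left sum_distrib_right mult_ac) (rule sum.swap)
  have match: "s k = t j" if "k < m" "j < l" "z k j \<noteq> 0" for k j
  proof -
    have "ip m (mv m ?X (r j)) (e k) = complex_of_real (t j) * z k j"
      unfolding z_def ip_def using r(1)[OF that(2)] by (simp add: sum_distrib_left mult_ac)
    moreover have "ip m (r j) (mv m ?X (e k)) = complex_of_real (s k) * z k j"
      unfolding z_def ip_def using eigendecomp_eigvec[OF es that(1)] by (simp add: sum_distrib_left mult_ac)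
    ultimately have "complex_of_real (t j) * z k j = complex_of_real (s k) * z k j"
      using ip_herm[OF gram_mat_herm] by metis
    then show ?thesis using that(3) by simp
  qed
  have col: "(\<Sum>k<m. (cmod (z k j))^2) = t j" if "j < l" for j
    using parseval[OF e, of "r j"] r(2)[OF that] unfolding z_def by (metis of_real_eq_iff)
  have row: "(\<Sum>j<l. (cmod (z k j))^2) = s k" if "k < m" for k
    using parseval[OF g, of "u k"] u[OF that] unfolding zu by (metis of_real_eq_iff)
  have "(\<Sum>k<m. eta (s k)) = (\<Sum>j<l. eta (t j))"
    by (rule eta_sum_match[where T = "\<lambda>k j. (cmod (z k j))^2"]) (use row col match in auto)
  then show ?thesis using eigendecomp_entropy[OF gram_mat_carrier es] eigendecomp_entropy[OF gram_mat_carrier gt]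
    by simp
qed

section \<open>Entropy of block-diagonal states\<close>

definition direct_sum_basis :: "nat \<Rightarrow> (nat \<Rightarrow> nat \<Rightarrow> nat \<Rightarrow> complex) \<Rightarrow> nat \<Rightarrow> nat \<Rightarrow> complex" where
  "direct_sum_basis d E K i = (if i div d = K div d then E (K div d) (K mod d) (i mod d) else 0)"

lemma direct_sum_basis_onb:
  assumes E: "\<And>x. x < nX \<Longrightarrow> onb d (E x)"
  shows "onb (nX*d) (direct_sum_basis d E)"
  unfolding ortho_def
proof (intro allI impI)
  let ?F = "direct_sum_basis d E"
  fix I J assume I: "I < nX*d" and J: "J < nX*d"
  have dp: "d > 0" using I by (cases d) auto
  have Ix: "I div d < nX" using I by (simp add: less_mult_imp_div_less)
  have Fpt: "?F K (x*d+c) = (if x = K div d then E x (K mod d) c else 0)" if "c < d" for K x c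
    unfolding direct_sum_basis_def using that by auto
  have "ip (nX*d) (?F I) (?F J) = (\<Sum>x<nX. \<Sum>c<d. ?F I (x*d+c) * cnj (?F J (x*d+c)))"
    unfolding ip_def by (rule sum_prod_index)
  also have "\<dots> = (\<Sum>x<nX. if x = I div d \<and> x = J div d then ip d (E x (I mod d)) (E x (J mod d)) else 0)"
    unfolding ip_def by (intro sum.cong refl) (auto simp: Fpt intro!: sum.neutral)
  also have "\<dots> = (if I div d = J div d then ip d (E (I div d) (I mod d)) (E (I div d) (J mod d)) else 0)"
    by (rule sum_diag_block[OF Ix])
  also have "\<dots> = (if I = J then 1 else 0)"
  proof (cases "I div d = J div d")
    case True
    moreover have "I = J \<longleftrightarrow> I mod d = J mod d" using True by (metis div_mult_mod_eq)
    ultimately show ?thesis using E[OF Ix] dp unfolding ortho_def by auto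
  qed auto
  finally show "ip (nX*d) (?F I) (?F J) = (if I = J then 1 else 0)" .
qed

lemma blockdiag_eigendecomp:
  assumes ed: "\<And>x. x < nX \<Longrightarrow> eigendecomp d (M x) (E x) (L x)"
    and Ze: "\<And>i j. i < nX*d \<Longrightarrow> j < nX*d \<Longrightarrow> Z $$ (i,j) =
       (if i div d = j div d then complex_of_real (p (i div d)) * M (i div d) $$ (i mod d, j mod d) else 0)"
  shows "eigendecomp (nX*d) Z (direct_sum_basis d E) (\<lambda>K. p (K div d) * L (K div d) (K mod d))"
  unfolding eigendecomp_def
proof (intro conjI allI impI direct_sum_basis_onb)
  show "onb d (E x)" if "x < nX" for x using ed[OF that] unfolding eigendecomp_def by blast
  let ?F = "direct_sum_basis d E"
  fix i j assume i: "i < nX*d" and j: "j < nX*d"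
  have ix: "i div d < nX" using i by (simp add: less_mult_imp_div_less)
  have dp: "d > 0" using i by (cases d) auto
  have Fpt: "?F (x*d+k) i = (if i div d = x then E x k (i mod d) else 0)" if "k < d" for i x k
    unfolding direct_sum_basis_def using that by auto
  have "(\<Sum>K<nX*d. complex_of_real (p (K div d) * L (K div d) (K mod d)) * ?F K i * cnj (?F K j))
      = (\<Sum>x<nX. if x = i div d \<and> x = j div d
           then (\<Sum>k<d. complex_of_real (p x * L x k) * E x k (i mod d) * cnj (E x k (j mod d))) else 0)"
    unfolding sum_prod_index using dp by (intro sum.cong refl) (auto simp: Fpt intro!: sum.neutral)
  also have "\<dots> = (if i div d = j div d then (\<Sum>k<d. complex_of_real (p (i div d) * L (i div d) k)
      * E (i div d) k (i mod d) * cnj (E (i div d) k (j mod d))) else 0)"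
    by (rule sum_diag_block[OF ix])
  also have "\<dots> = Z $$ (i,j)"
    using Ze[OF i j] ed[OF ix] dp unfolding eigendecomp_def
    by (cases "i div d = j div d") (simp_all add: sum_distrib_left mult_ac del: div_mult_self1 div_mult_self2)
  finally show "Z $$ (i,j) = (\<Sum>K<nX*d. complex_of_real (p (K div d) * L (K div d) (K mod d)) * ?F K i * cnj (?F K j))"
    by simp
qed

theorem blockdiag_entropy:
  fixes p :: "nat \<Rightarrow> real" and M :: "nat \<Rightarrow> complex mat"
  assumes Z: "Z \<in> carrier_mat (nX*d) (nX*d)"
    and Ze: "\<And>i j. i < nX*d \<Longrightarrow> j < nX*d \<Longrightarrow> Z $$ (i,j) =
       (if i div d = j div d then complex_of_real (p (i div d)) * M (i div d) $$ (i mod d, j mod d) else 0)"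
    and M: "\<And>x. x < nX \<Longrightarrow> density d (M x)"
    and p: "\<And>x. x < nX \<Longrightarrow> p x \<ge> 0"
  shows "vN_entropy Z = (\<Sum>x<nX. eta (p x)) + (\<Sum>x<nX. p x * vN_entropy (M x))"
proof -
  obtain E L where EL: "\<forall>x<nX. eigendecomp d (M x) (E x) (L x) \<and> (\<forall>k<d. 0 \<le> L x k) \<and> (\<Sum>k<d. L x k) = 1"
    using density_spectral_family[of nX d M, OF M] by blast
  have "vN_entropy Z = (\<Sum>K<nX*d. eta (p (K div d) * L (K div d) (K mod d)))"
    by (rule eigendecomp_entropy[OF Z blockdiag_eigendecomp[OF _ Ze]]) (use EL in blast)
  also have "\<dots> = (\<Sum>x<nX. \<Sum>k<d. eta (p x * L x k))"
    by (subst sum_prod_index) (auto intro!: sum.cong)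
  also have "\<dots> = (\<Sum>x<nX. eta (p x) + p x * vN_entropy (M x))"
  proof (rule sum.cong[OF refl])
    fix x assume x: "x \<in> {..<nX}"
    have HM: "vN_entropy (M x) = (\<Sum>k<d. eta (L x k))"
      using M[of x] EL x unfolding density_def by (intro eigendecomp_entropy) auto
    have "(\<Sum>k<d. eta (p x * L x k)) = (\<Sum>k<d. L x k * eta (p x) + p x * eta (L x k))"
      using p EL x by (intro sum.cong refl eta_mult) auto
    also have "\<dots> = eta (p x) + p x * vN_entropy (M x)"
      using EL x HM by (simp add: sum.distrib sum_distrib_left[symmetric] sum_distrib_right[symmetric])
    finally show "(\<Sum>k<d. eta (p x * L x k)) = eta (p x) + p x * vN_entropy (M x)" .
  qed
  also have "\<dots> = (\<Sum>x<nX. eta (p x)) + (\<Sum>x<nX. p x * vN_entropy (M x))" by (rule sum.distrib)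
  finally show ?thesis .
qed

lemma entropy_bounds:
  assumes M: "density n M"
  shows "0 \<le> vN_entropy M \<and> vN_entropy M \<le> 2 * real n"
proof -
  obtain e d where ed: "eigendecomp n M e d" and d0: "\<forall>k<n. 0 \<le> d k" and d1: "(\<Sum>k<n. d k) = 1"
    using density_spectral[OF M] by blast
  have dle: "d k \<le> 1" if "k < n" for k
    using member_le_sum[of k "{..<n}" d] d0 d1 that by auto
  have "0 \<le> (\<Sum>k<n. eta (d k))" using eta_bounds d0 dle by (intro sum_nonneg) auto
  moreover have "(\<Sum>k<n. eta (d k)) \<le> (\<Sum>k<n. 2)" using eta_bounds d0 dle by (intro sum_mono) auto
  ultimately show ?thesis using eigendecomp_entropy[OF _ ed] M unfolding density_def by simp
qed

section \<open>The reduced states of a cq state\<close>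

lemma kron_entry:
  "i < dim_row A * dim_row B \<Longrightarrow> j < dim_col A * dim_col B \<Longrightarrow>
   kron A B $$ (i,j) = A $$ (i div dim_row B, j div dim_col B) * B $$ (i mod dim_row B, j mod dim_col B)"
  unfolding kron_def by simp

lemma kron_dims: "dim_row (kron A B) = dim_row A * dim_row B" "dim_col (kron A B) = dim_col A * dim_col B"
  unfolding kron_def by simp_all

lemma outer_entry: "i < dim_vec v \<Longrightarrow> j < dim_vec v \<Longrightarrow> outer v $$ (i,j) = v $ i * cnj (v $ j)"
  unfolding outer_def by simp

lemma outer_dims: "dim_row (outer v) = dim_vec v" "dim_col (outer v) = dim_vec v"
  unfolding outer_def by simp_all

lemma proj_entry: "i < n \<Longrightarrow> j < n \<Longrightarrow> proj n x $$ (i,j) = (if i = x \<and> j = x then 1 else 0)"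
  unfolding proj_def by simp

lemma proj_dims: "dim_row (proj n x) = n" "dim_col (proj n x) = n"
  unfolding proj_def by simp_all

lemma isometry_norm:
  assumes V: "V \<in> carrier_mat (dB*dE) dA'" and iso: "adj V * V = 1\<^sub>m dA'"
  shows "(\<Sum>b<dB. \<Sum>e<dE. (\<Sum>c<dA'. V $$ (b*dE+e, c) * f c) * cnj (\<Sum>c<dA'. V $$ (b*dE+e, c) * f c))
       = (\<Sum>c<dA'. f c * cnj (f c))"
proof -
  have isoe: "(\<Sum>r<dB*dE. cnj (V $$ (r,c')) * V $$ (r,c)) = (if c' = c then 1 else 0)"
    if "c < dA'" "c' < dA'" for c c'
  proof -
    have "(adj V * V) $$ (c',c) = (\<Sum>r<dB*dE. cnj (V $$ (r,c')) * V $$ (r,c))"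
      using V that unfolding adj_def by (auto simp: scalar_prod_def atLeast0LessThan)
    then show ?thesis using iso that by simp
  qed
  have "(\<Sum>b<dB. \<Sum>e<dE. (\<Sum>c<dA'. V $$ (b*dE+e, c) * f c) * cnj (\<Sum>c<dA'. V $$ (b*dE+e, c) * f c))
      = (\<Sum>r<dB*dE. \<Sum>c<dA'. \<Sum>c'<dA'. f c * cnj (f c') * (cnj (V $$ (r,c')) * V $$ (r,c)))"
    by (subst sum_prod_index) (simp add: sum_distrib_left sum_distrib_right mult_ac,
        intro sum.cong refl sum.swap)
  also have "\<dots> = (\<Sum>c<dA'. \<Sum>c'<dA'. \<Sum>r<dB*dE. f c * cnj (f c') * (cnj (V $$ (r,c')) * V $$ (r,c)))"
    by (rule sum_rotate3[symmetric])
  also have "\<dots> = (\<Sum>c<dA'. \<Sum>c'<dA'. f c * cnj (f c') * (if c' = c then 1 else 0))"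
    using isoe by (simp add: sum_distrib_left[symmetric])
  also have "\<dots> = (\<Sum>c<dA'. f c * cnj (f c))"
    by (intro sum.cong refl) (simp add: if_distrib sum.delta cong: if_cong)
  finally show ?thesis .
qed

text \<open>An ensemble \<open>{p x, \<psi> x}\<close> of pure states on \<open>A \<otimes> A'\<close> sent through the isometry \<open>V : A' \<rightarrow> B \<otimes> E\<close>;
  \<open>rho\<close> is the resulting admissible state on \<open>XABE\<close>.\<close>
locale cq_ensemble =
  fixes dA' dB dE :: nat and V :: "complex mat" and nX dA :: nat
    and p :: "nat \<Rightarrow> real" and \<psi> :: "nat \<Rightarrow> complex vec"
  assumes V: "V \<in> carrier_mat (dB*dE) dA'" and iso: "adj V * V = 1\<^sub>m dA'"
    and psi: "\<And>x. x < nX \<Longrightarrow> \<psi> x \<in> carrier_vec (dA*dA') \<and> \<psi> x \<bullet>c \<psi> x = 1"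
    and p0: "\<And>x. x < nX \<Longrightarrow> p x \<ge> 0" and p1: "(\<Sum>x<nX. p x) = 1"
begin

definition rho :: "complex mat" where "rho = cq_state nX dA V p \<psi>"

text \<open>Amplitude of \<open>(1 \<otimes> V) \<psi> x\<close> at the basis vector \<open>|a\<rangle>\<^sub>A |b\<rangle>\<^sub>B |e\<rangle>\<^sub>E\<close>.\<close>
definition amp :: "nat \<Rightarrow> nat \<Rightarrow> nat \<Rightarrow> nat \<Rightarrow> complex" where
  "amp x a b e = (\<Sum>c<dA'. V $$ (b*dE+e, c) * \<psi> x $ (a*dA' + c))"

text \<open>The reduced states of the pure state \<open>(1 \<otimes> V) \<psi> x\<close> on \<open>B\<close>, on \<open>AB\<close> and on \<open>E\<close>, and the
  reduced state of \<open>\<psi> x\<close> on \<open>A'\<close>.\<close>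
definition beta :: "nat \<Rightarrow> complex mat" where
  "beta x = mat dB dB (\<lambda>(b,b'). \<Sum>a<dA. \<Sum>e<dE. amp x a b e * cnj (amp x a b' e))"

definition tau :: "nat \<Rightarrow> complex mat" where
  "tau x = gram_mat (dA*dB) dE (\<lambda>e s. amp x (s div dB) (s mod dB) e)"

definition eps :: "nat \<Rightarrow> complex mat" where
  "eps x = gram_mat dE (dA*dB) (\<lambda>s e. amp x (s div dB) (s mod dB) e)"

definition alpha :: "nat \<Rightarrow> complex mat" where
  "alpha x = gram_mat dA' dA (\<lambda>a c. \<psi> x $ (a*dA'+c))"

definition rhoXAB where "rhoXAB = rho_XAB dB dE (nX, dA, rho)"
definition rhoXB where "rhoXB = rho_XB dB dE (nX, dA, rho)"
definition rhoX where "rhoX = rho_X dB dE (nX, dA, rho)"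
definition rhoB where "rhoB = rho_B dB dE (nX, dA, rho)"

lemma amp_eq:
  assumes x: "x < nX" and a: "a < dA" and b: "b < dB" and e: "e < dE"
  shows "(kron (1\<^sub>m dA) V *\<^sub>v \<psi> x) $ (a*(dB*dE) + (b*dE + e)) = amp x a b e"
proof -
  let ?r = "b*dE + e"
  have r: "?r < dB*dE" using flat_index_less b e by auto
  have px: "dim_vec (\<psi> x) = dA*dA'" using psi[OF x] by auto
  have dims: "dim_row V = dB*dE" "dim_col V = dA'" using V by auto
  have i: "a*(dB*dE) + ?r < dA*(dB*dE)" using flat_index_less[OF a r] .
  have "(kron (1\<^sub>m dA) V *\<^sub>v \<psi> x) $ (a*(dB*dE) + ?r)
      = (\<Sum>j<dA*dA'. kron (1\<^sub>m dA) V $$ (a*(dB*dE) + ?r, j) * \<psi> x $ j)"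
    using i px dims unfolding kron_def by (simp add: scalar_prod_def atLeast0LessThan)
  also have "\<dots> = (\<Sum>a'<dA. \<Sum>c<dA'. kron (1\<^sub>m dA) V $$ (a*(dB*dE) + ?r, a'*dA' + c) * \<psi> x $ (a'*dA' + c))"
    by (rule sum_prod_index)
  also have "\<dots> = (\<Sum>a'<dA. \<Sum>c<dA'. (if a = a' then V $$ (?r, c) * \<psi> x $ (a'*dA' + c) else 0))"
  proof (intro sum.cong refl)
    fix a' c assume a': "a' \<in> {..<dA}" and c: "c \<in> {..<dA'}"
    have j: "a'*dA' + c < dA*dA'" using flat_index_less a' c by auto
    have "(a*(dB*dE) + ?r) div (dB*dE) = a" "(a*(dB*dE) + ?r) mod (dB*dE) = ?r"
      "(a'*dA' + c) div dA' = a'" "(a'*dA' + c) mod dA' = c"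
      using r c by (simp_all only: flat_index_div flat_index_mod lessThan_iff)
    then have "kron (1\<^sub>m dA) V $$ (a*(dB*dE) + ?r, a'*dA' + c) = 1\<^sub>m dA $$ (a, a') * V $$ (?r, c)"
      using i j dims by (subst kron_entry) simp_all
    then show "kron (1\<^sub>m dA) V $$ (a*(dB*dE) + ?r, a'*dA' + c) * \<psi> x $ (a'*dA' + c)
        = (if a = a' then V $$ (?r, c) * \<psi> x $ (a'*dA' + c) else 0)"
      using a a' by simp
  qed
  also have "\<dots> = amp x a b e"
    using a unfolding amp_def by (subst sum.swap) (simp add: sum.delta')
  finally show ?thesis .
qed

lemma rho_entry:
  assumes x: "x < nX" "x' < nX" and a: "a < dA" "a' < dA" and b: "b < dB" "b' < dB" and e: "e < dE" "e' < dE"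
  shows "rho $$ (((x*dA+a)*dB+b)*dE+e, ((x'*dA+a')*dB+b')*dE+e')
     = (if x = x' then complex_of_real (p x) * amp x a b e * cnj (amp x a' b' e') else 0)"
proof -
  let ?L = "dA*(dB*dE)" and ?v = "\<lambda>y. kron (1\<^sub>m dA) V *\<^sub>v \<psi> y"
  have idx: "((y*dA+c)*dB+d)*dE+f = y*?L + (c*(dB*dE) + (d*dE + f))" for y c d f
    by (simp add: algebra_simps)
  have r: "b*dE + e < dB*dE" "b'*dE + e' < dB*dE" using flat_index_less b e by auto
  have i: "a*(dB*dE) + (b*dE + e) < ?L" "a'*(dB*dE) + (b'*dE + e') < ?L" using flat_index_less a r by auto
  have I: "x*?L + (a*(dB*dE) + (b*dE + e)) < nX*?L" "x'*?L + (a'*(dB*dE) + (b'*dE + e')) < nX*?L"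
    using flat_index_less x i by auto
  have dv: "dim_vec (?v y) = ?L" for y using V unfolding kron_def by simp
  have block: "kron (proj nX y) (outer (?v y)) $$ (x*?L + (a*(dB*dE) + (b*dE + e)), x'*?L + (a'*(dB*dE) + (b'*dE + e')))
      = (if x = y \<and> x' = y then amp x a b e * cnj (amp x a' b' e') else 0)" if "y < nX" for y
  proof -
    have "kron (proj nX y) (outer (?v y)) $$ (x*?L + (a*(dB*dE) + (b*dE + e)), x'*?L + (a'*(dB*dE) + (b'*dE + e')))
        = proj nX y $$ (x, x') * outer (?v y) $$ (a*(dB*dE) + (b*dE + e), a'*(dB*dE) + (b'*dE + e'))"
      using I i V by (subst kron_entry)
        (simp_all add: proj_dims outer_dims dv kron_dims flat_index_div flat_index_mod)
    also have "\<dots> = (if x = y \<and> x' = y then 1 else 0) * (?v y $ (a*(dB*dE) + (b*dE + e)) * cnj (?v y $ (a'*(dB*dE) + (b'*dE + e'))))"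
      using x i V by (simp add: proj_entry outer_entry kron_dims)
    finally show ?thesis using amp_eq that a b e by auto
  qed
  have "rho $$ (((x*dA+a)*dB+b)*dE+e, ((x'*dA+a')*dB+b')*dE+e')
      = (\<Sum>y<nX. complex_of_real (p y) * (if x = y \<and> x' = y then amp x a b e * cnj (amp x a' b' e') else 0))"
    using I block unfolding idx rho_def cq_state_def Let_def by (simp add: V[THEN carrier_matD(1)])
  also have "\<dots> = (if x = x' then complex_of_real (p x) * amp x a b e * cnj (amp x a' b' e') else 0)"
    using x by (simp add: if_distrib sum.delta cong: if_cong)
  finally show ?thesis .
qed

lemma rho_XAB_entry:
  assumes x: "x < nX" "x' < nX" and a: "a < dA" "a' < dA" and b: "b < dB" "b' < dB"
  shows "rhoXAB $$ ((x*dA+a)*dB+b, (x'*dA+a')*dB+b') =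
    (if x = x' then complex_of_real (p x) * (\<Sum>e<dE. amp x a b e * cnj (amp x a' b' e)) else 0)"
proof -
  have i: "(x*dA+a)*dB+b < nX*dA*dB" "(x'*dA+a')*dB+b' < nX*dA*dB"
    using flat_index_less[OF flat_index_less[OF x(1) a(1)] b(1)]
      flat_index_less[OF flat_index_less[OF x(2) a(2)] b(2)] by auto
  have "rhoXAB $$ ((x*dA+a)*dB+b, (x'*dA+a')*dB+b')
      = (\<Sum>e<dE. rho $$ (((x*dA+a)*dB+b)*dE+e, ((x'*dA+a')*dB+b')*dE+e))"
    using i unfolding rhoXAB_def rho_XAB_def ptrace2_def by simp
  also have "\<dots> = (\<Sum>e<dE. if x = x' then complex_of_real (p x) * (amp x a b e * cnj (amp x a' b' e)) else 0)"
    using rho_entry[OF x a b] by (intro sum.cong refl) (simp add: mult.assoc)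
  also have "\<dots> = (if x = x' then complex_of_real (p x) * (\<Sum>e<dE. amp x a b e * cnj (amp x a' b' e)) else 0)"
    by (simp add: sum_distrib_left)
  finally show ?thesis .
qed

lemma rho_XAB_carrier: "rhoXAB \<in> carrier_mat (nX*(dA*dB)) (nX*(dA*dB))"
  unfolding rhoXAB_def rho_XAB_def ptrace2_def by (simp add: mult.assoc)

lemma rho_XAB_blocks:
  assumes i: "i < nX*(dA*dB)" and j: "j < nX*(dA*dB)"
  shows "rhoXAB $$ (i,j) = (if i div (dA*dB) = j div (dA*dB)
     then complex_of_real (p (i div (dA*dB))) * tau (i div (dA*dB)) $$ (i mod (dA*dB), j mod (dA*dB)) else 0)"
proof -
  let ?m = "dA*dB"
  have m: "?m > 0" using i by (cases ?m) auto
  then have dB: "dB > 0" by auto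
  have x: "i div ?m < nX" "j div ?m < nX" using i j by (simp_all add: less_mult_imp_div_less)
  have s: "i mod ?m < ?m" "j mod ?m < ?m" using m by auto
  have a: "i mod ?m div dB < dA" "j mod ?m div dB < dA" using s by (simp_all add: less_mult_imp_div_less)
  have b: "i mod ?m mod dB < dB" "j mod ?m mod dB < dB" using dB by auto
  have ieq: "k = (k div ?m * dA + k mod ?m div dB) * dB + k mod ?m mod dB" for k
  proof -
    have "(k div ?m * dA + k mod ?m div dB) * dB + k mod ?m mod dB
        = k div ?m * ?m + (k mod ?m div dB * dB + k mod ?m mod dB)"
      by (simp add: algebra_simps)
    also have "\<dots> = k" by (simp only: div_mult_mod_eq)
    finally show ?thesis by simp
  qed
  have "rhoXAB $$ (i,j) = rhoXAB $$ ((i div ?m * dA + i mod ?m div dB) * dB + i mod ?m mod dB,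
      (j div ?m * dA + j mod ?m div dB) * dB + j mod ?m mod dB)"
    using ieq[of i] ieq[of j] by simp
  also have "\<dots> = (if i div ?m = j div ?m then complex_of_real (p (i div ?m)) * (\<Sum>e<dE.
      amp (i div ?m) (i mod ?m div dB) (i mod ?m mod dB) e * cnj (amp (i div ?m) (j mod ?m div dB) (j mod ?m mod dB) e)) else 0)"
    by (rule rho_XAB_entry[OF x a b])
  also have "\<dots> = (if i div ?m = j div ?m then complex_of_real (p (i div ?m)) * tau (i div ?m) $$ (i mod ?m, j mod ?m) else 0)"
    unfolding tau_def using s by (simp add: gram_mat_entry)
  finally show ?thesis .
qed

lemma rho_XB_entry:
  assumes x: "x < nX" "x' < nX" and b: "b < dB" "b' < dB"
  shows "rhoXB $$ (x*dB+b, x'*dB+b') = (if x = x' then complex_of_real (p x) * beta x $$ (b,b') else 0)"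
proof -
  have i: "x*dB+b < nX*dB" "x'*dB+b' < nX*dB" using flat_index_less x b by auto
  have "rhoXB $$ (x*dB+b, x'*dB+b') = (\<Sum>a<dA. rhoXAB $$ ((x*dA+a)*dB+b, (x'*dA+a)*dB+b'))"
    using i b unfolding rhoXB_def rho_XB_def ptrace_mid_def rhoXAB_def[symmetric] by simp
  also have "\<dots> = (\<Sum>a<dA. if x = x' then complex_of_real (p x) * (\<Sum>e<dE. amp x a b e * cnj (amp x a b' e)) else 0)"
    using rho_XAB_entry x b by (intro sum.cong refl) auto
  also have "\<dots> = (if x = x' then complex_of_real (p x) * beta x $$ (b,b') else 0)"
    unfolding beta_def using b by (simp add: sum_distrib_left)
  finally show ?thesis .
qed

lemma rho_XB_carrier: "rhoXB \<in> carrier_mat (nX*dB) (nX*dB)"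
  unfolding rhoXB_def rho_XB_def ptrace_mid_def by simp

lemma rho_XB_blocks:
  assumes i: "i < nX*dB" and j: "j < nX*dB"
  shows "rhoXB $$ (i,j) = (if i div dB = j div dB
     then complex_of_real (p (i div dB)) * beta (i div dB) $$ (i mod dB, j mod dB) else 0)"
proof -
  have dB: "dB > 0" using i by (cases dB) auto
  have x: "i div dB < nX" "j div dB < nX" using i j by (simp_all add: less_mult_imp_div_less)
  have b: "i mod dB < dB" "j mod dB < dB" using dB by auto
  have "rhoXB $$ (i,j) = rhoXB $$ ((i div dB)*dB + i mod dB, (j div dB)*dB + j mod dB)" by simp
  then show ?thesis by (simp only: rho_XB_entry[OF x b])
qed

lemma amp_norm:
  assumes "x < nX" "a < dA"
  shows "(\<Sum>b<dB. \<Sum>e<dE. amp x a b e * cnj (amp x a b e)) = (\<Sum>c<dA'. \<psi> x $ (a*dA'+c) * cnj (\<psi> x $ (a*dA'+c)))"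
  unfolding amp_def by (rule isometry_norm[OF V iso])

lemma psi_norm:
  assumes x: "x < nX"
  shows "(\<Sum>a<dA. \<Sum>c<dA'. \<psi> x $ (a*dA'+c) * cnj (\<psi> x $ (a*dA'+c))) = 1"
proof -
  have "1 = \<psi> x \<bullet>c \<psi> x" using psi x by auto
  also have "\<dots> = (\<Sum>j<dA*dA'. \<psi> x $ j * cnj (\<psi> x $ j))"
    using psi[OF x] by (auto simp: scalar_prod_def atLeast0LessThan)
  also have "\<dots> = (\<Sum>a<dA. \<Sum>c<dA'. \<psi> x $ (a*dA'+c) * cnj (\<psi> x $ (a*dA'+c)))" by (rule sum_prod_index)
  finally show ?thesis by simp
qed

lemma beta_density: "x < nX \<Longrightarrow> density dB (beta x)"
proof -
  assume x: "x < nX"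
  have "beta x = gram_mat dB (dA*dE) (\<lambda>k b. amp x (k div dE) b (k mod dE))"
    unfolding beta_def gram_mat_def by (intro cong_mat refl) (auto simp: sum_prod_index)
  moreover have "(\<Sum>k<dA*dE. \<Sum>b<dB. amp x (k div dE) b (k mod dE) * cnj (amp x (k div dE) b (k mod dE)))
      = (\<Sum>a<dA. \<Sum>e<dE. \<Sum>b<dB. amp x a b e * cnj (amp x a b e))"
    by (subst sum_prod_index) simp
  moreover have "\<dots> = (\<Sum>a<dA. \<Sum>b<dB. \<Sum>e<dE. amp x a b e * cnj (amp x a b e))"
    by (intro sum.cong refl sum.swap)
  moreover have "\<dots> = 1" using amp_norm psi_norm x by simp
  ultimately show ?thesis by (simp add: gram_mat_density)
qed

lemma tau_density: "x < nX \<Longrightarrow> density (dA*dB) (tau x)"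
  unfolding tau_def
proof (rule gram_mat_density)
  assume x: "x < nX"
  have "(\<Sum>e<dE. \<Sum>s<dA*dB. amp x (s div dB) (s mod dB) e * cnj (amp x (s div dB) (s mod dB) e))
      = (\<Sum>a<dA. \<Sum>b<dB. \<Sum>e<dE. amp x a b e * cnj (amp x a b e))"
    by (subst sum_prod_index) (simp, rule sum_rotate3[symmetric])
  then show "(\<Sum>e<dE. \<Sum>s<dA*dB. amp x (s div dB) (s mod dB) e * cnj (amp x (s div dB) (s mod dB) e)) = 1"
    using amp_norm psi_norm x by simp
qed

lemma alpha_density: "x < nX \<Longrightarrow> density dA' (alpha x)"
  unfolding alpha_def by (rule gram_mat_density) (rule psi_norm)

lemma H_rho_XB: "vN_entropy rhoXB = (\<Sum>x<nX. eta (p x)) + (\<Sum>x<nX. p x * vN_entropy (beta x))"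
  by (rule blockdiag_entropy[OF rho_XB_carrier rho_XB_blocks beta_density p0])

lemma H_rho_XAB: "vN_entropy rhoXAB = (\<Sum>x<nX. eta (p x)) + (\<Sum>x<nX. p x * vN_entropy (tau x))"
  by (rule blockdiag_entropy[OF rho_XAB_carrier rho_XAB_blocks tau_density p0])

lemma H_rho_X: "vN_entropy rhoX = (\<Sum>x<nX. eta (p x))"
proof -
  have "rhoX $$ (x,x') = (if x = x' then complex_of_real (p x) else 0)" if "x < nX" "x' < nX" for x x'
  proof -
    have "rhoX $$ (x,x') = (\<Sum>b<dB. rhoXB $$ (x*dB+b, x'*dB+b))"
      using that unfolding rhoX_def rho_X_def ptrace2_def rhoXB_def[symmetric] by simp
    also have "\<dots> = (\<Sum>b<dB. if x = x' then complex_of_real (p x) * beta x $$ (b,b) else 0)"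
      using rho_XB_entry that by (intro sum.cong refl) auto
    also have "\<dots> = (if x = x' then complex_of_real (p x) * tr dB (beta x) else 0)"
      unfolding tr_def by (simp add: sum_distrib_left)
    finally show ?thesis using beta_density that unfolding density_def by simp
  qed
  then have "eigendecomp nX rhoX (\<lambda>k a. if k = a then 1 else 0) p" by (intro diagonal_eigendecomp) auto
  moreover have "rhoX \<in> carrier_mat nX nX" unfolding rhoX_def rho_X_def ptrace2_def by simp
  ultimately show ?thesis using eigendecomp_entropy by blast
qed

lemma rho_B_entry:
  assumes "b < dB" "b' < dB"
  shows "rhoB $$ (b,b') = (\<Sum>x<nX. complex_of_real (p x) * beta x $$ (b,b'))"
proof -
  have "rhoB $$ (b,b') = (\<Sum>x<nX. rhoXB $$ (x*dB+b, x*dB+b'))"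
    using assms unfolding rhoB_def rho_B_def ptrace1_def rhoXB_def[symmetric] by simp
  also have "\<dots> = (\<Sum>x<nX. complex_of_real (p x) * beta x $$ (b,b'))"
    using rho_XB_entry assms by (intro sum.cong refl) auto
  finally show ?thesis .
qed

lemma rho_B_carrier: "rhoB \<in> carrier_mat dB dB"
  unfolding rhoB_def rho_B_def ptrace1_def by simp

lemma rho_B_density: "density dB rhoB"
proof -
  have h: "herm dB rhoB" unfolding herm_def
  proof (intro allI impI)
    fix a b assume ab: "a < dB" "b < dB"
    have "beta x $$ (a,b) = cnj (beta x $$ (b,a))" if "x < nX" for x
      using beta_density[OF that] ab unfolding density_def herm_def by blast
    then have "(\<Sum>x<nX. complex_of_real (p x) * beta x $$ (a,b)) = (\<Sum>x<nX. complex_of_real (p x) * cnj (beta x $$ (b,a)))"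
      by (intro sum.cong refl) simp
    then show "rhoB $$ (a,b) = cnj (rhoB $$ (b,a))" using rho_B_entry ab by simp
  qed
  have psd: "psd dB rhoB" unfolding psd_def
  proof
    fix z
    have "ip dB (mv dB rhoB z) z = (\<Sum>x<nX. complex_of_real (p x) * ip dB (mv dB (beta x) z) z)"
      by (rule ip_mv_comb) (use rho_B_entry in auto)
    then have "Re (ip dB (mv dB rhoB z) z) = (\<Sum>x<nX. p x * Re (ip dB (mv dB (beta x) z) z))" by simp
    also have "\<dots> \<ge> 0"
      using beta_density p0 unfolding density_def psd_def by (intro sum_nonneg mult_nonneg_nonneg) auto
    finally show "0 \<le> Re (ip dB (mv dB rhoB z) z)" .
  qed
  have "tr dB rhoB = (\<Sum>b<dB. \<Sum>x<nX. complex_of_real (p x) * beta x $$ (b,b))"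
    unfolding tr_def using rho_B_entry by simp
  also have "\<dots> = (\<Sum>x<nX. complex_of_real (p x) * tr dB (beta x))"
    unfolding tr_def by (subst sum.swap) (simp add: sum_distrib_left)
  also have "\<dots> = (\<Sum>x<nX. complex_of_real (p x))" using beta_density unfolding density_def by simp
  also have "\<dots> = 1" using p1 by (metis of_real_1 of_real_sum)
  finally show ?thesis using h psd rho_B_carrier unfolding density_def by simp
qed

lemma mutual_formula: "mutual_XB dB dE (nX, dA, rho) = vN_entropy rhoB - (\<Sum>x<nX. p x * vN_entropy (beta x))"
  unfolding mutual_XB_def rhoX_def[symmetric] rhoB_def[symmetric] rhoXB_def[symmetric] H_rho_X H_rho_XB by simp

lemma coherent_formula: "coherent_info dB dE (nX, dA, rho) = (\<Sum>x<nX. p x * (vN_entropy (beta x) - vN_entropy (tau x)))"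
  unfolding coherent_info_def rhoXB_def[symmetric] rhoXAB_def[symmetric] H_rho_XB H_rho_XAB
  by (simp add: right_diff_distrib sum_subtractf)

lemma mutual_bound: "mutual_XB dB dE (nX, dA, rho) \<le> 2 * real dB"
proof -
  have "(\<Sum>x<nX. p x * vN_entropy (beta x)) \<ge> 0"
    using entropy_bounds beta_density p0 by (intro sum_nonneg mult_nonneg_nonneg) auto
  moreover have "vN_entropy rhoB \<le> 2 * real dB" using entropy_bounds[OF rho_B_density] by auto
  ultimately show ?thesis unfolding mutual_formula by simp
qed

text \<open>\<open>tau x\<close> and \<open>eps x\<close> are the two marginals of the pure state \<open>(1 \<otimes> V) \<psi> x\<close> on \<open>AB \<otimes> E\<close>.\<close>
lemma H_tau_eps: "vN_entropy (tau x) = vN_entropy (eps x)"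
  unfolding tau_def eps_def using pure_marginals_entropy[of "dA*dB" dE "\<lambda>s e. amp x (s div dB) (s mod dB) e"] .

lemma state_admissible: "0 < dA \<Longrightarrow> (nX, dA, rho) \<in> admissible_states dA' dB dE V"
  unfolding admissible_states_def rho_def using psi p0 p1 by blast

end

section \<open>Refining the ensemble by diagonalising the input states\<close>

text \<open>Fix eigendecompositions \<open>alpha x = \<Sum>y q x y |u x y\<rangle>\<langle>u x y|\<close> of the \<open>A'\<close>-marginals.  The refined
  ensemble \<open>{p x \<cdot> q x y, u x y}\<close> feeds the channel the same average input, without reference system.\<close>
locale refined_ensemble = cq_ensemble +
  fixes u :: "nat \<Rightarrow> nat \<Rightarrow> nat \<Rightarrow> complex" and q :: "nat \<Rightarrow> nat \<Rightarrow> real"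
  assumes alpha_eig: "\<And>x. x < nX \<Longrightarrow> eigendecomp dA' (alpha x) (u x) (q x)"
    and q0: "\<And>x y. x < nX \<Longrightarrow> y < dA' \<Longrightarrow> 0 \<le> q x y"
    and q1: "\<And>x. x < nX \<Longrightarrow> (\<Sum>y<dA'. q x y) = 1"
begin

definition amp_ref :: "nat \<Rightarrow> nat \<Rightarrow> nat \<Rightarrow> nat \<Rightarrow> complex" where
  "amp_ref x y b e = (\<Sum>c<dA'. V $$ (b*dE+e, c) * u x y c)"

definition beta_ref :: "nat \<Rightarrow> nat \<Rightarrow> complex mat" where
  "beta_ref x y = gram_mat dB dE (\<lambda>e b. amp_ref x y b e)"

definition eps_ref :: "nat \<Rightarrow> nat \<Rightarrow> complex mat" where
  "eps_ref x y = gram_mat dE dB (\<lambda>b e. amp_ref x y b e)"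

lemma sesquilinear_mixture:
  assumes x: "x < nX"
  shows "(\<Sum>a<dA. (\<Sum>c<dA'. K1 c * \<psi> x $ (a*dA'+c)) * cnj (\<Sum>c<dA'. K2 c * \<psi> x $ (a*dA'+c)))
       = (\<Sum>y<dA'. complex_of_real (q x y) * ((\<Sum>c<dA'. K1 c * u x y c) * cnj (\<Sum>c<dA'. K2 c * u x y c)))"
proof -
  have "(\<Sum>a<dA. (\<Sum>c<dA'. K1 c * \<psi> x $ (a*dA'+c)) * cnj (\<Sum>c<dA'. K2 c * \<psi> x $ (a*dA'+c)))
     = (\<Sum>a<dA. \<Sum>c<dA'. \<Sum>c'<dA'. K1 c * cnj (K2 c') * (\<psi> x $ (a*dA'+c) * cnj (\<psi> x $ (a*dA'+c'))))"
    by (simp add: sum_distrib_left sum_distrib_right mult_ac) (rule sum.cong[OF refl], rule sum.swap)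
  also have "\<dots> = (\<Sum>c<dA'. \<Sum>c'<dA'. \<Sum>a<dA. K1 c * cnj (K2 c') * (\<psi> x $ (a*dA'+c) * cnj (\<psi> x $ (a*dA'+c'))))"
    by (rule sum_rotate3[symmetric])
  also have "\<dots> = (\<Sum>c<dA'. \<Sum>c'<dA'. K1 c * cnj (K2 c') * alpha x $$ (c,c'))"
    unfolding alpha_def by (intro sum.cong refl) (simp add: gram_mat_entry sum_distrib_left)
  also have "\<dots> = (\<Sum>c<dA'. \<Sum>c'<dA'. \<Sum>y<dA'. K1 c * cnj (K2 c') * (complex_of_real (q x y) * u x y c * cnj (u x y c')))"
    using alpha_eig[OF x] unfolding eigendecomp_def by (intro sum.cong refl) (simp add: sum_distrib_left)
  also have "\<dots> = (\<Sum>y<dA'. \<Sum>c<dA'. \<Sum>c'<dA'. K1 c * cnj (K2 c') * (complex_of_real (q x y) * u x y c * cnj (u x y c')))"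
    by (rule sum_rotate3)
  also have "\<dots> = (\<Sum>y<dA'. complex_of_real (q x y) * ((\<Sum>c<dA'. K1 c * u x y c) * cnj (\<Sum>c<dA'. K2 c * u x y c)))"
    by (simp add: sum_distrib_left sum_distrib_right mult_ac) (rule sum.cong[OF refl], rule sum.swap)
  finally show ?thesis .
qed

lemma amp_mixture:
  "x < nX \<Longrightarrow> (\<Sum>a<dA. amp x a b e * cnj (amp x a b' e'))
     = (\<Sum>y<dA'. complex_of_real (q x y) * (amp_ref x y b e * cnj (amp_ref x y b' e')))"
  unfolding amp_def amp_ref_def by (rule sesquilinear_mixture)

lemma beta_mixture:
  assumes x: "x < nX"
  shows "\<forall>b<dB. \<forall>b'<dB. beta x $$ (b,b') = (\<Sum>y<dA'. complex_of_real (q x y) * beta_ref x y $$ (b,b'))"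
proof (intro allI impI)
  fix b b' assume bb: "b < dB" "b' < dB"
  have "beta x $$ (b,b') = (\<Sum>e<dE. \<Sum>a<dA. amp x a b e * cnj (amp x a b' e))"
    unfolding beta_def using bb by simp (rule sum.swap)
  also have "\<dots> = (\<Sum>y<dA'. complex_of_real (q x y) * beta_ref x y $$ (b,b'))"
    unfolding amp_mixture[OF x] beta_ref_def using bb
    by (subst sum.swap) (simp add: gram_mat_entry sum_distrib_left)
  finally show "beta x $$ (b,b') = (\<Sum>y<dA'. complex_of_real (q x y) * beta_ref x y $$ (b,b'))" .
qed

lemma eps_mixture:
  assumes x: "x < nX"
  shows "\<forall>e<dE. \<forall>e'<dE. eps x $$ (e,e') = (\<Sum>y<dA'. complex_of_real (q x y) * eps_ref x y $$ (e,e'))"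
proof (intro allI impI)
  fix e e' assume ee: "e < dE" "e' < dE"
  have "eps x $$ (e,e') = (\<Sum>b<dB. \<Sum>a<dA. amp x a b e * cnj (amp x a b e'))"
    unfolding eps_def using ee by (simp add: gram_mat_entry sum_prod_index) (rule sum.swap)
  also have "\<dots> = (\<Sum>y<dA'. complex_of_real (q x y) * eps_ref x y $$ (e,e'))"
    unfolding amp_mixture[OF x] eps_ref_def using ee
    by (subst sum.swap) (simp add: gram_mat_entry sum_distrib_left)
  finally show "eps x $$ (e,e') = (\<Sum>y<dA'. complex_of_real (q x y) * eps_ref x y $$ (e,e'))" .
qed

lemma amp_ref_norm:
  assumes x: "x < nX" and y: "y < dA'"
  shows "(\<Sum>b<dB. \<Sum>e<dE. amp_ref x y b e * cnj (amp_ref x y b e)) = 1"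
proof -
  have "(\<Sum>b<dB. \<Sum>e<dE. amp_ref x y b e * cnj (amp_ref x y b e)) = (\<Sum>c<dA'. u x y c * cnj (u x y c))"
    unfolding amp_ref_def by (rule isometry_norm[OF V iso])
  also have "\<dots> = 1" using alpha_eig[OF x] y unfolding eigendecomp_def ortho_def ip_def by auto
  finally show ?thesis .
qed

lemma beta_ref_density: "x < nX \<Longrightarrow> y < dA' \<Longrightarrow> density dB (beta_ref x y)"
  unfolding beta_ref_def using amp_ref_norm by (intro gram_mat_density) (simp add: sum.swap[of _ "{..<dE}"])

lemma eps_ref_density: "x < nX \<Longrightarrow> y < dA' \<Longrightarrow> density dE (eps_ref x y)"
  unfolding eps_ref_def using amp_ref_norm by (intro gram_mat_density) simp

lemma H_beta_ref_eps_ref: "vN_entropy (beta_ref x y) = vN_entropy (eps_ref x y)"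
  unfolding beta_ref_def eps_ref_def using pure_marginals_entropy[of dB dE "\<lambda>b e. amp_ref x y b e"] .

lemma H_beta_ge:
  assumes x: "x < nX"
  shows "(\<Sum>y<dA'. q x y * vN_entropy (beta_ref x y)) \<le> vN_entropy (beta x)"
  using beta_density[OF x] unfolding density_def
  by (intro entropy_concave[where n = dB] beta_ref_density x q0 q1 beta_mixture) auto

lemma H_eps_ge:
  assumes x: "x < nX"
  shows "(\<Sum>y<dA'. q x y * vN_entropy (beta_ref x y)) \<le> vN_entropy (eps x)"
  unfolding H_beta_ref_eps_ref eps_def
  by (intro entropy_concave[where n = dE] eps_ref_density x q0 q1 gram_mat_carrier gram_mat_herm
      eps_mixture[OF x, unfolded eps_def])

lemma tradeoff_le_refined:
  assumes lam: "0 \<le> lam" "lam \<le> 1"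
  shows "mutual_XB dB dE (nX, dA, rho) + lam * coherent_info dB dE (nX, dA, rho)
     \<le> vN_entropy rhoB - (\<Sum>x<nX. p x * (\<Sum>y<dA'. q x y * vN_entropy (beta_ref x y)))"
proof -
  have "p x * (\<Sum>y<dA'. q x y * vN_entropy (beta_ref x y))
      \<le> p x * ((1 - lam) * vN_entropy (beta x) + lam * vN_entropy (eps x))" if x: "x < nX" for x
  proof -
    let ?h = "\<Sum>y<dA'. q x y * vN_entropy (beta_ref x y)"
    have "?h = (1 - lam) * ?h + lam * ?h" by (simp add: algebra_simps)
    also have "\<dots> \<le> (1 - lam) * vN_entropy (beta x) + lam * vN_entropy (eps x)"
      using H_beta_ge[OF x] H_eps_ge[OF x] lam by (intro add_mono mult_left_mono) auto
    finally show ?thesis using p0[OF x] by (intro mult_left_mono) auto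
  qed
  then have "(\<Sum>x<nX. p x * (\<Sum>y<dA'. q x y * vN_entropy (beta_ref x y)))
      \<le> (\<Sum>x<nX. p x * ((1 - lam) * vN_entropy (beta x) + lam * vN_entropy (eps x)))"
    by (intro sum_mono) auto
  moreover have "mutual_XB dB dE (nX, dA, rho) + lam * coherent_info dB dE (nX, dA, rho)
      = vN_entropy rhoB - (\<Sum>x<nX. p x * ((1 - lam) * vN_entropy (beta x) + lam * vN_entropy (eps x)))"
    unfolding mutual_formula coherent_formula H_tau_eps
    by (simp add: sum_distrib_left sum_subtractf[symmetric] sum.distrib[symmetric] algebra_simps)
  ultimately show ?thesis by simp
qed

text \<open>The refined ensemble, indexed by the flat pair \<open>X = x*dA' + y\<close>.\<close>
definition p_ref :: "nat \<Rightarrow> real" where "p_ref X = p (X div dA') * q (X div dA') (X mod dA')"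

definition psi_ref :: "nat \<Rightarrow> complex vec" where
  "psi_ref X = vec (1*dA') (\<lambda>c. u (X div dA') (X mod dA') c)"

lemma refined_cq_ensemble: "cq_ensemble dA' dB dE V (nX*dA') 1 p_ref psi_ref"
proof
  show "V \<in> carrier_mat (dB*dE) dA'" by (rule V)
  show "adj V * V = 1\<^sub>m dA'" by (rule iso)
  fix X assume X: "X < nX*dA'"
  have dp: "dA' > 0" using X by (cases dA') auto
  have x: "X div dA' < nX" and y: "X mod dA' < dA'" using X dp by (auto simp: less_mult_imp_div_less)
  have "psi_ref X \<bullet>c psi_ref X = (\<Sum>c<dA'. u (X div dA') (X mod dA') c * cnj (u (X div dA') (X mod dA') c))"
    unfolding psi_ref_def by (simp add: scalar_prod_def atLeast0LessThan)
  also have "\<dots> = 1" using alpha_eig[OF x] y unfolding eigendecomp_def ortho_def ip_def by auto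
  finally show "psi_ref X \<in> carrier_vec (1*dA') \<and> psi_ref X \<bullet>c psi_ref X = 1"
    unfolding psi_ref_def by simp
  show "0 \<le> p_ref X" unfolding p_ref_def using p0[OF x] q0[OF x y] by simp
next
  have "(\<Sum>X<nX*dA'. p_ref X) = (\<Sum>x<nX. \<Sum>y<dA'. p x * q x y)"
    unfolding p_ref_def sum_prod_index by (intro sum.cong refl) auto
  also have "\<dots> = 1" using q1 p1 by (simp add: sum_distrib_left[symmetric])
  finally show "(\<Sum>X<nX*dA'. p_ref X) = 1" .
qed

end

context refined_ensemble
begin

interpretation refined: cq_ensemble dA' dB dE V "nX*dA'" 1 p_ref psi_ref
  by (rule refined_cq_ensemble)

lemma refined_beta: "X < nX*dA' \<Longrightarrow> refined.beta X = beta_ref (X div dA') (X mod dA')"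
  unfolding refined.beta_def beta_ref_def gram_mat_def refined.amp_def amp_ref_def psi_ref_def
  by (intro cong_mat refl) auto

lemma refined_index:
  assumes "x < nX" "y < dA'"
  shows "p_ref (x*dA'+y) = p x * q x y" "refined.beta (x*dA'+y) = beta_ref x y"
proof -
  have X: "x*dA'+y < nX*dA'" using flat_index_less[OF assms] .
  show "p_ref (x*dA'+y) = p x * q x y" using assms by (simp add: p_ref_def flat_index_div flat_index_mod)
  show "refined.beta (x*dA'+y) = beta_ref x y" using refined_beta[OF X] assms by (simp add: flat_index_div flat_index_mod)
qed

lemma refined_rho_B: "refined.rhoB = rhoB"
proof (rule eq_matI)
  show "dim_row refined.rhoB = dim_row rhoB" "dim_col refined.rhoB = dim_col rhoB"
    using refined.rho_B_carrier rho_B_carrier by auto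
  fix b b' assume "b < dim_row rhoB" "b' < dim_col rhoB"
  then have bb: "b < dB" "b' < dB" using rho_B_carrier by auto
  have "refined.rhoB $$ (b,b') = (\<Sum>x<nX. \<Sum>y<dA'. complex_of_real (p_ref (x*dA'+y)) * refined.beta (x*dA'+y) $$ (b,b'))"
    unfolding refined.rho_B_entry[OF bb] by (rule sum_prod_index)
  also have "\<dots> = (\<Sum>x<nX. \<Sum>y<dA'. complex_of_real (p x) * (complex_of_real (q x y) * beta_ref x y $$ (b,b')))"
    by (intro sum.cong refl) (simp add: refined_index[simplified])
  also have "\<dots> = (\<Sum>x<nX. complex_of_real (p x) * (\<Sum>y<dA'. complex_of_real (q x y) * beta_ref x y $$ (b,b')))"
    by (simp add: sum_distrib_left)
  also have "\<dots> = rhoB $$ (b,b')" using beta_mixture bb by (simp add: rho_B_entry)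
  finally show "refined.rhoB $$ (b,b') = rhoB $$ (b,b')" .
qed

lemma refined_mutual:
  "mutual_XB dB dE (nX*dA', 1, refined.rho)
     = vN_entropy rhoB - (\<Sum>x<nX. p x * (\<Sum>y<dA'. q x y * vN_entropy (beta_ref x y)))"
proof -
  have "(\<Sum>X<nX*dA'. p_ref X * vN_entropy (refined.beta X))
      = (\<Sum>x<nX. \<Sum>y<dA'. p x * (q x y * vN_entropy (beta_ref x y)))"
    unfolding sum_prod_index by (intro sum.cong refl) (simp add: refined_index[simplified])
  also have "\<dots> = (\<Sum>x<nX. p x * (\<Sum>y<dA'. q x y * vN_entropy (beta_ref x y)))"
    by (simp add: sum_distrib_left)
  finally have "(\<Sum>X<nX*dA'. p_ref X * vN_entropy (refined.beta X))
      = (\<Sum>x<nX. p x * (\<Sum>y<dA'. q x y * vN_entropy (beta_ref x y)))" .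
  then show ?thesis using refined.mutual_formula unfolding refined_rho_B by simp
qed

lemma refined_dominates:
  assumes "0 \<le> lam" "lam \<le> 1"
  shows "\<exists>\<sigma>\<in>admissible_states dA' dB dE V.
     mutual_XB dB dE (nX, dA, rho) + lam * coherent_info dB dE (nX, dA, rho) \<le> mutual_XB dB dE \<sigma>"
  using tradeoff_le_refined[OF assms] refined_mutual refined.state_admissible by force

end

lemma (in cq_ensemble) tradeoff_dominated:
  assumes "0 \<le> lam" "lam \<le> 1"
  shows "\<exists>\<sigma>\<in>admissible_states dA' dB dE V.
     mutual_XB dB dE (nX, dA, rho) + lam * coherent_info dB dE (nX, dA, rho) \<le> mutual_XB dB dE \<sigma>"
proof -
  obtain u q where uq: "\<forall>x<nX. eigendecomp dA' (alpha x) (u x) (q x) \<and> (\<forall>y<dA'. 0 \<le> q x y) \<and> (\<Sum>y<dA'. q x y) = 1"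
    using density_spectral_family[of nX dA' alpha, OF alpha_density] by blast
  interpret refined_ensemble dA' dB dE V nX dA p \<psi> u q
    by unfold_locales (use uq in auto)
  show ?thesis by (rule refined_dominates[OF assms])
qed

lemma admissible_cq_ensemble:
  assumes "isometry dA' dB dE V" and "s \<in> admissible_states dA' dB dE V"
  obtains nX dA p \<psi> where "s = (nX, dA, cq_state nX dA V p \<psi>)" "cq_ensemble dA' dB dE V nX dA p \<psi>"
proof -
  from assms(2) obtain nX dA p \<psi> where s: "s = (nX, dA, cq_state nX dA V p \<psi>)"
    and c: "\<forall>x<nX. 0 \<le> p x" "(\<Sum>x<nX. p x) = 1" "\<forall>x<nX. \<psi> x \<in> carrier_vec (dA * dA') \<and> \<psi> x \<bullet>c \<psi> x = 1"
    unfolding admissible_states_def by blast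
  have "cq_ensemble dA' dB dE V nX dA p \<psi>" using assms(1) c unfolding isometry_def by unfold_locales auto
  then show ?thesis using s that by blast
qed

lemma mutual_bdd_above:
  assumes "isometry dA' dB dE V"
  shows "bdd_above (mutual_XB dB dE ` admissible_states dA' dB dE V)"
proof (rule bdd_aboveI2)
  fix s assume "s \<in> admissible_states dA' dB dE V"
  then obtain nX dA p \<psi> where "s = (nX, dA, cq_state nX dA V p \<psi>)" "cq_ensemble dA' dB dE V nX dA p \<psi>"
    using admissible_cq_ensemble assms by metis
  then show "mutual_XB dB dE s \<le> 2 * real dB" using cq_ensemble.mutual_bound cq_ensemble.rho_def by metis
qed

lemma tradeoff_le_sup:
  assumes isom: "isometry dA' dB dE V" and lam: "0 \<le> lam" "lam \<le> 1"
    and t: "t \<in> admissible_states dA' dB dE V"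
  shows "mutual_XB dB dE t + lam * coherent_info dB dE t \<le> Sup (mutual_XB dB dE ` admissible_states dA' dB dE V)"
proof -
  obtain nX dA p \<psi> where t_eq: "t = (nX, dA, cq_state nX dA V p \<psi>)"
    and ens: "cq_ensemble dA' dB dE V nX dA p \<psi>"
    using admissible_cq_ensemble[OF isom t] by metis
  interpret cq_ensemble dA' dB dE V nX dA p \<psi> by (rule ens)
  obtain \<sigma> where "\<sigma> \<in> admissible_states dA' dB dE V"
    "mutual_XB dB dE t + lam * coherent_info dB dE t \<le> mutual_XB dB dE \<sigma>"
    using tradeoff_dominated[OF lam] unfolding t_eq rho_def by auto
  then show ?thesis using cSup_upper[OF _ mutual_bdd_above[OF isom]] by force
qed

theorem mainTheorem5:
  fixes dA' dB dE :: nat and V :: "complex mat" and lam :: real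
    and s :: "nat \<times> nat \<times> complex mat"
  assumes "isometry dA' dB dE V"
    and "0 \<le> lam" and "lam < 1"
    and "s \<in> admissible_states dA' dB dE V"
  shows "mutual_XB dB dE s + lam * coherent_info dB dE s
           \<le> Sup (mutual_XB dB dE ` admissible_states dA' dB dE V)
         \<and> f_lambda dA' dB dE V lam \<le> f_lambda dA' dB dE V 0"
proof -
  have bound: "\<And>t. t \<in> admissible_states dA' dB dE V \<Longrightarrow>
      mutual_XB dB dE t + lam * coherent_info dB dE t \<le> Sup (mutual_XB dB dE ` admissible_states dA' dB dE V)"
    using tradeoff_le_sup[OF assms(1,2)] assms(3) by simp
  have "f_lambda dA' dB dE V lam \<le> Sup (mutual_XB dB dE ` admissible_states dA' dB dE V)"
    unfolding f_lambda_def using assms(4) bound by (intro cSUP_least) auto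
  moreover have "f_lambda dA' dB dE V 0 = Sup (mutual_XB dB dE ` admissible_states dA' dB dE V)"
    unfolding f_lambda_def by simp
  ultimately show ?thesis using bound[OF assms(4)] by simp
qed

end
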